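(* For every instance $\pi$ of the fully labeled one-dimensional rearrangement problem (LOR), the algorithm OptPlanLOR computes a valid rearrangement plan that has minimum end-effector travel among all valid plans for $\pi$ that use the minimum possible number of pick-n-swaps.
   Context: Setting (LOR). A row of $m$ cells $1,\dots,m$, cell $i$ located at the point $i$ on the real line. Each cell initially holds exactly one item; items carry distinct labels $1,\dots,m$. An instance is a permutation $\pi$ of $\{1,\dots,m\}$, where $\pi_i$ is the label of the item initially in cell $i$; the goal is that item $i$ ends in cell $i$. A robot end-effector can hold at most one item; it starts at cell $1$ holding nothing. A pick-n-swap operation at a cell $p$: if holding nothing, pick up the item in $p$; if holding an item and $p$ contains an item, exchange the two; if holding an item and $p$ is empty, put the held item into $p$. A plan is a sequence $P=(p_0,p_1,\dots,p_N)$ of cells ($p_0=$ cell $1$) visited in order with a pick-n-swap at each of $p_1,\dots,p_N$, followed by a return to $p_{N+1}:=p_0$; it is valid if at the end every item $i$ is in cell $i$ and the end-effector holds nothing. $N$ is its number of pick-n-swaps and $\sum_{i=0}^N|p_i-p_{i+1}|$ its end-effector travel. Cycles: the non-trivial cycles (length $\ge 2$) of $\pi$, where cell $i$ points to cell $\pi_i$ (the goal of the item in cell $i$). For a cycle $c$ let $\min(c),\max(c)$ be its smallest and largest cell; for a set $C$ of cycles, $\min(C)=\min_{c\in C}\min(c)$, $\max(C)=\max_{c\in C}\max(c)$. Cycle groups: start with each cycle as a singleton group and repeatedly replace two groups whose intervals $[\min,\max]$ intersect by their union, until the groups' intervals are pairwise disjoint. OptPlanLOR: process the leftmost group. Within a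 group $C=\{c_1,c_2,\dots\}$ with $\min(c_1)<\min(c_2)<\dots$, start following cycle $c_1$ from cell $\min(c_1)$ by cycle following (pick the item at the starting cell, repeatedly carry the held item to its goal cell and swap, and close the cycle by placing the last item in the starting cell). When, while following a cycle, the end-effector carrying an item would pass over $\min(c')$ for the next not-yet-started cycle $c'$ of the group, it switches: at cell $\min(c')$ it swaps the carried item into that cell (parking it) and follows $c'$ in the same manner (recursively applying the same switching rule); upon closing $c'$ at $\min(c')$ it picks the parked item back up and resumes the interrupted cycle. When the end-effector reaches $\max(C)$ and there is a group to the right of $C$, it pauses and processes the next group to the right in the same way (recursively), then returns to finish $C$. After all groups are processed the end-effector returns to cell $1$. *)

theory Defs
  imports Main "HOL-Combinatorics.Permutations"
begin

text \<open>Cells are the natural numbers 1..m. An instance is a permutation pi of {1..m};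
  pi i is the label of the item initially in cell i, and item i must end in cell i.
  An arrangement maps each cell to its content (None = empty).\<close>

type_synonym arrangement = "nat \<Rightarrow> nat option"

definition init_arr :: "(nat \<Rightarrow> nat) \<Rightarrow> arrangement" where
  "init_arr pi = (\<lambda>i. Some (pi i))"

text \<open>A pick-n-swap at cell p exchanges the content of the end-effector with the content
  of cell p (this covers picking, swapping and placing).\<close>

fun pns :: "arrangement \<times> nat option \<Rightarrow> nat \<Rightarrow> arrangement \<times> nat option" where
  "pns (arr, h) p = (arr(p := h), arr p)"

definition exec_plan :: "(nat \<Rightarrow> nat) \<Rightarrow> nat list \<Rightarrow> arrangement \<times> nat option" where
  "exec_plan pi ps = foldl pns (init_arr pi, None) ps"

text \<open>A plan (p_0 = 1, p_1, ..., p_N) is represented by the list [p_1, ..., p_N] of cells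
  where pick-n-swaps are performed; its number of pick-n-swaps is the length of the list.\<close>

definition valid_plan :: "nat \<Rightarrow> (nat \<Rightarrow> nat) \<Rightarrow> nat list \<Rightarrow> bool" where
  "valid_plan m pi ps \<longleftrightarrow>
     set ps \<subseteq> {1..m} \<and>
     snd (exec_plan pi ps) = None \<and>
     (\<forall>i\<in>{1..m}. fst (exec_plan pi ps) i = Some i)"

definition cdist :: "nat \<Rightarrow> nat \<Rightarrow> nat" where
  "cdist a b = max a b - min a b"

fun path_len :: "nat list \<Rightarrow> nat" where
  "path_len (a # b # rest) = cdist a b + path_len (b # rest)"
| "path_len _ = 0"

definition travel :: "nat list \<Rightarrow> nat" where
  "travel ps = path_len (1 # ps @ [1])"

definition cycle_of :: "(nat \<Rightarrow> nat) \<Rightarrow> nat \<Rightarrow> nat set" where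
  "cycle_of pi i = {(pi ^^ n) i | n. True}"

definition lor_cycles :: "nat \<Rightarrow> (nat \<Rightarrow> nat) \<Rightarrow> nat set set" where
  "lor_cycles m pi = {cycle_of pi i | i. i \<in> {1..m} \<and> pi i \<noteq> i}"

definition intervals_meet :: "nat set \<Rightarrow> nat set \<Rightarrow> bool" where
  "intervals_meet c d \<longleftrightarrow> max (Min c) (Min d) \<le> min (Max c) (Max d)"

text \<open>Cycle groups: the result of repeatedly merging groups with intersecting intervals
  [min, max], i.e. the connected components of the "intervals intersect" relation
  on the non-trivial cycles.\<close>

definition group_of :: "nat \<Rightarrow> (nat \<Rightarrow> nat) \<Rightarrow> nat set \<Rightarrow> nat set set" where
  "group_of m pi c =
     {d \<in> lor_cycles m pi.
        (c, d) \<in> {(x, y). x \<in> lor_cycles m pi \<and> y \<in> lor_cycles m pi \<and> intervals_meet x y}\<^sup>*}"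

text \<open>State: (current position, goal cell of the held item (None = holding nothing),
  minima of the cycles already started, stack of (parking cell, goal of the parked item)).
  A cycle is identified with its minimum cell.\<close>

type_synonym alg_state = "nat \<times> nat option \<times> nat set \<times> (nat \<times> nat) list"

definition strictly_between :: "nat \<Rightarrow> nat \<Rightarrow> nat \<Rightarrow> bool" where
  "strictly_between a x b \<longleftrightarrow> min a b < x \<and> x < max a b"

definition start_cycle :: "(nat \<Rightarrow> nat) \<Rightarrow> nat \<Rightarrow> nat set \<Rightarrow> (nat \<times> nat) list
    \<Rightarrow> nat option \<Rightarrow> nat \<times> alg_state" where
  "start_cycle pi q S stk parked =
     (q, (q, Some (pi q), insert q S,
          (case parked of None \<Rightarrow> stk | Some t \<Rightarrow> (q, t) # stk)))"

text \<open>One step of OptPlanLOR: returns the next cell of the plan and the new state,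
  or None when the algorithm has finished (it then returns to cell 1).\<close>

definition opt_step :: "nat \<Rightarrow> (nat \<Rightarrow> nat) \<Rightarrow> alg_state \<Rightarrow> (nat \<times> alg_state) option" where
  "opt_step m pi s =
    (case s of (p, None, S, stk) \<Rightarrow>
        \<comment> \<open>holding nothing: start the leftmost not-yet-started cycle (if any)\<close>
        (let U = {Min c | c. c \<in> lor_cycles m pi \<and> Min c \<notin> S} in
         if U = {} then None else Some (start_cycle pi (Min U) S stk None))
     | (p, Some t, S, stk) \<Rightarrow>
        let Cp = group_of m pi (cycle_of pi p);
            R = {Min c | c. c \<in> lor_cycles m pi \<and> Min c > p};
            Ct = group_of m pi (cycle_of pi t);
            U = {Min c | c. c \<in> Ct \<and> Min c \<notin> S}
        in
        if pi p \<noteq> p \<and> p = Max (\<Union>Cp) \<and> R \<noteq> {} then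
          \<comment> \<open>reached max of the current group, and a group lies to the right:
              process the next group (parking the held item at its first cycle's minimum)\<close>
          Some (start_cycle pi (Min R) S stk (Some t))
        else if U \<noteq> {} \<and> strictly_between p (Min U) t then
          \<comment> \<open>would pass over the minimum of the next not-yet-started cycle of the group:
              park the held item there and follow that cycle\<close>
          Some (start_cycle pi (Min U) S stk (Some t))
        else
          \<comment> \<open>carry the held item to its goal cell t and pick-n-swap there\<close>
          Some (t,
            if t = Min (cycle_of pi t) then
              \<comment> \<open>closing a cycle at its minimum: pick back a parked item, if any\<close>
              (case stk of
                 (c, t') # rest \<Rightarrow> if c = t then (t, Some t', S, rest) else (t, None, S, stk)
               | [] \<Rightarrow> (t, None, S, stk))
            else (t, Some (pi t), S, stk)))"

fun opt_run :: "nat \<Rightarrow> nat \<Rightarrow> (nat \<Rightarrow> nat) \<Rightarrow> alg_state \<Rightarrow> nat list" where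
  "opt_run 0 m pi s = []"
| "opt_run (Suc n) m pi s =
     (case opt_step m pi s of None \<Rightarrow> [] | Some (v, s') \<Rightarrow> v # opt_run n m pi s')"

text \<open>The plan computed by OptPlanLOR (list of pick-n-swap cells). The algorithm performs
  at most 2m pick-n-swaps, so the fuel 2m+1 is never exhausted.\<close>

definition opt_plan_lor :: "nat \<Rightarrow> (nat \<Rightarrow> nat) \<Rightarrow> nat list" where
  "opt_plan_lor m pi = opt_run (2 * m + 1) m pi (1, None, {}, [])"

end

theory Submission
  imports Defs "HOL-Combinatorics.Orbits"
begin

text \<open>Every misplaced cell must be visited, and its last pick-n-swap drops its own item, which
  was picked up earlier in the same cycle; so the first pick-n-swap in a cycle is never such a
  last one, and a valid plan needs at least one pick-n-swap per misplaced cell plus one per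
  cycle. Each pick-n-swap of OptPlanLOR either places an item at its goal or starts a cycle,
  so it uses exactly that many.

  For the travel, count the crossings of each gap between neighbouring cells: a closed tour
  crosses a gap equally often in both directions, so its travel is twice the number of its
  rightward crossings. Every valid plan crosses a gap rightwards at least as often as there are
  items that start left of it and belong right of it, since it carries one item at a time, and
  at least once if some cycle lies entirely to its right. OptPlanLOR moves right only toward
  the goal of the item it carries, or when it enters the next group of cycles (from cell 1, or
  from the maximum of a group already sorted), so it attains the larger of these two bounds at
  every gap. Its travel is therefore minimal even among all valid plans.\<close>

section \<open>Gap crossings\<close>

text \<open>Gap x lies between cells x and x + 1.\<close>

fun up_crossings :: "nat \<Rightarrow> nat list \<Rightarrow> nat" where
  "up_crossings x (a # b # w) = of_bool (a \<le> x \<and> x < b) + up_crossings x (b # w)"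
| "up_crossings x _ = 0"

fun down_crossings :: "nat \<Rightarrow> nat list \<Rightarrow> nat" where
  "down_crossings x (a # b # w) = of_bool (b \<le> x \<and> x < a) + down_crossings x (b # w)"
| "down_crossings x _ = 0"

lemma up_crossings_le_snoc: "up_crossings x w \<le> up_crossings x (w @ [b])"
  by (induction x w rule: up_crossings.induct) auto

lemma up_crossings_pos:
  "hd w \<le> x \<Longrightarrow> y \<in> set w \<Longrightarrow> x < y \<Longrightarrow> 0 < up_crossings x w"
  by (induction x w rule: up_crossings.induct) (force simp: not_le)+

lemma up_down_crossings_balance:
  "w \<noteq> [] \<Longrightarrow>
   up_crossings x w + of_bool (last w \<le> x) = down_crossings x w + of_bool (hd w \<le> x)"
  by (induction x w rule: up_crossings.induct) auto

lemma cdist_eq_sum_crossings: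
  assumes "a \<in> {1..K}" "b \<in> {1..K}"
  shows "cdist a b = (\<Sum>x\<in>{1..<K}. of_bool (a \<le> x \<and> x < b) + of_bool (b \<le> x \<and> x < a))"
proof -
  have "{1..<K} \<inter> {x. a \<le> x \<and> x < b} = {a..<b}" "{1..<K} \<inter> {x. b \<le> x \<and> x < a} = {b..<a}"
    using assms by auto
  then show ?thesis
    by (simp add: sum.distrib cdist_def max_def min_def)
qed

lemma path_len_eq_sum_crossings:
  "set w \<subseteq> {1..K} \<Longrightarrow> path_len w = (\<Sum>x\<in>{1..<K}. up_crossings x w + down_crossings x w)"
proof (induction w rule: path_len.induct)
  case (1 a b w)
  then have "cdist a b = (\<Sum>x\<in>{1..<K}. of_bool (a \<le> x \<and> x < b) + of_bool (b \<le> x \<and> x < a))"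
    by (intro cdist_eq_sum_crossings) auto
  with 1 show ?case by (simp add: sum.distrib)
qed simp_all

lemma travel_eq_sum_up_crossings:
  assumes "set ps \<subseteq> {1..K}" "1 \<le> K"
  shows "travel ps = (\<Sum>x\<in>{1..<K}. 2 * up_crossings x (1 # ps @ [1]))"
proof -
  have "travel ps = (\<Sum>x\<in>{1..<K}. up_crossings x (1 # ps @ [1]) + down_crossings x (1 # ps @ [1]))"
    unfolding travel_def using assms by (intro path_len_eq_sum_crossings) auto
  also have "\<dots> = (\<Sum>x\<in>{1..<K}. 2 * up_crossings x (1 # ps @ [1]))"
    using up_down_crossings_balance[of "1 # ps @ [1]"] by (intro sum.cong) simp_all
  finally show ?thesis .
qed

lemma foldl_pns_unvisited: "k \<notin> set ps \<Longrightarrow> fst (foldl pns s ps) k = fst s k"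
  by (induction ps arbitrary: s) (auto simp: split_pairs)

lemma exec_plan_unvisited: "k \<notin> set ps \<Longrightarrow> fst (exec_plan pi ps) k = Some (pi k)"
  unfolding exec_plan_def by (simp add: foldl_pns_unvisited init_arr_def)

lemma exec_plan_items_from_visited:
  "set_option (snd (exec_plan pi ps)) \<union> (\<Union>k\<in>set ps. set_option (fst (exec_plan pi ps) k))
     \<subseteq> pi ` set ps"
proof (induction ps rule: rev_induct)
  case (snoc p ps)
  obtain arr h where E: "exec_plan pi ps = (arr, h)" by fastforce
  then have E': "exec_plan pi (ps @ [p]) = (arr(p := h), arr p)"
    by (simp add: exec_plan_def)
  have IH: "set_option h \<subseteq> pi ` set ps" "\<And>k. k \<in> set ps \<Longrightarrow> set_option (arr k) \<subseteq> pi ` set ps"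
    using snoc E by auto
  have "set_option (arr p) \<subseteq> pi ` set (ps @ [p])"
  proof (cases "p \<in> set ps")
    case False
    then show ?thesis using exec_plan_unvisited[OF False, of pi] E by simp
  qed (use IH in auto)
  then show ?case using IH unfolding E' by (fastforce split: if_splits)
qed (simp add: exec_plan_def)

lemma held_item_from_visited_cell:
  "snd (exec_plan pi ps) = Some i \<Longrightarrow> \<exists>k\<in>set ps. i = pi k"
  using exec_plan_items_from_visited[of pi ps] by auto

lemma exec_plan_last_visit:
  assumes "j < length ps" "ps ! j = i" "i \<notin> set (drop (Suc j) ps)"
  shows "fst (exec_plan pi ps) i = snd (exec_plan pi (take j ps))"
proof -
  have "ps = take j ps @ i # drop (Suc j) ps"
    using assms(1,2) id_take_nth_drop by fastforce
  then have "exec_plan pi ps = foldl pns (pns (exec_plan pi (take j ps)) i) (drop (Suc j) ps)"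
    unfolding exec_plan_def by (metis foldl_Cons foldl_append)
  then show ?thesis
    using foldl_pns_unvisited[OF assms(3)] by (cases "exec_plan pi (take j ps)") simp
qed

lemma last_occurrence:
  assumes "x \<in> set xs"
  obtains j where "j < length xs" "xs ! j = x" "x \<notin> set (drop (Suc j) xs)"
proof -
  from split_list_last[OF assms] obtain ys zs where "xs = ys @ x # zs" "x \<notin> set zs"
    by blast
  then show ?thesis by (intro that[of "length ys"]) auto
qed

lemma first_occurrence:
  assumes "\<exists>y\<in>set xs. P y"
  obtains j where "j < length xs" "P (xs ! j)" "\<And>i. i < j \<Longrightarrow> \<not> P (xs ! i)"
proof -
  from split_list_first_prop[OF assms] obtain ys y zs
    where "xs = ys @ y # zs" "P y" "\<forall>y\<in>set ys. \<not> P y" by blast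
  then show ?thesis by (intro that[of "length ys"]) (auto simp: nth_append)
qed

definition goal_beyond :: "nat \<Rightarrow> nat option \<Rightarrow> bool" where
  "goal_beyond x c \<longleftrightarrow> (\<exists>g. c = Some g \<and> x < g)"

text \<open>The items that still have to be carried rightwards across gap x.\<close>

definition demand :: "nat \<Rightarrow> arrangement \<Rightarrow> nat option \<Rightarrow> nat \<Rightarrow> nat" where
  "demand x arr hand p =
     (\<Sum>k=1..x. of_bool (goal_beyond x (arr k))) + of_bool (p \<le> x \<and> goal_beyond x hand)"

lemma demand_pns:
  assumes "1 \<le> p'"
  shows "demand x (arr(p' := hand)) (arr p') p' + of_bool (p \<le> x \<and> x < p' \<and> goal_beyond x hand)
       = demand x arr hand p + of_bool (p' \<le> x \<and> x < p \<and> goal_beyond x hand)"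
proof (cases "p' \<le> x")
  case True
  let ?f = "\<lambda>arr k. of_bool (goal_beyond x (arr k)) :: nat"
  have "p' \<in> {1..x}" using assms True by simp
  then have "sum (?f arr) {1..x} = ?f arr p' + sum (?f arr) ({1..x} - {p'})"
    and "sum (?f (arr(p' := hand))) {1..x} = ?f (arr(p' := hand)) p' + sum (?f arr) ({1..x} - {p'})"
    by (simp_all add: sum.remove del: sum_of_bool_eq)
  then show ?thesis using True by (auto simp: demand_def simp del: sum_of_bool_eq)
qed (auto simp: demand_def)

lemma demand_le_up_crossings:
  "0 \<notin> set ps \<Longrightarrow>
   demand x arr hand p \<le> up_crossings x (p # ps) +
     demand x (fst (foldl pns (arr, hand) ps)) (snd (foldl pns (arr, hand) ps)) (last (p # ps))"
proof (induction ps arbitrary: p arr hand)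
  case (Cons p' ps)
  have "1 \<le> p'" using Cons.prems by (cases p') auto
  then have
    "demand x arr hand p \<le> demand x (arr(p' := hand)) (arr p') p' + of_bool (p \<le> x \<and> x < p')"
    using demand_pns[of p' x arr hand p] by (auto simp: of_bool_def split: if_splits)
  moreover have "demand x (arr(p' := hand)) (arr p') p' \<le> up_crossings x (p' # ps) +
     demand x (fst (foldl pns (arr, hand) (p' # ps))) (snd (foldl pns (arr, hand) (p' # ps)))
       (last (p # p' # ps))"
    using Cons by simp
  ultimately show ?case by simp
qed simp

section \<open>Cycles and cycle groups\<close>

locale lor =
  fixes m :: nat and pi :: "nat \<Rightarrow> nat"
  assumes perm: "pi permutes {1..m}"
begin

abbreviation cyc :: "nat \<Rightarrow> nat set" where
  "cyc \<equiv> orbit pi"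

definition cmin :: "nat \<Rightarrow> nat" where
  "cmin x = Min (cyc x)"

definition cmax :: "nat \<Rightarrow> nat" where
  "cmax x = Max (cyc x)"

definition moved :: "nat \<Rightarrow> bool" where
  "moved x \<longleftrightarrow> x \<in> {1..m} \<and> pi x \<noteq> x"

definition cycle_mins :: "nat set" where
  "cycle_mins = {x. moved x \<and> cmin x = x}"

definition steps_to_min :: "nat \<Rightarrow> nat" where
  "steps_to_min x = funpow_dist pi x (cmin x)"

lemma permutation_pi: "permutation pi"
  using perm by (auto simp: permutation_permutes)

lemma cycle_of_eq_orbit: "cycle_of pi = cyc"
  by (auto simp: fun_eq_iff cycle_of_def orbit_altdef_permutation[OF permutation_pi])

lemma pi_outside: "x \<notin> {1..m} \<Longrightarrow> pi x = x"
  using perm by (simp add: permutes_not_in)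

lemma self_in_cyc [simp]: "x \<in> cyc x"
  by (rule permutation_self_in_orbit[OF permutation_pi])

lemma cyc_eq: "y \<in> cyc x \<Longrightarrow> cyc y = cyc x"
  by (rule orbit_cyclic_eq3[OF cyclic_on_orbit'[OF permutation_pi]])

lemma pi_in_cyc: "y \<in> cyc x \<Longrightarrow> pi y \<in> cyc x"
  by (rule orbit.step)

lemma cyc_pi [simp]: "cyc (pi x) = cyc x"
  by (rule permutation_orbit_step[OF permutation_pi])

lemma in_cyc_pi_iff [simp]: "pi k \<in> cyc x \<longleftrightarrow> k \<in> cyc x"
  by (metis cyc_eq cyc_pi self_in_cyc)

lemma finite_cyc [simp]: "finite (cyc x)"
  by (rule finite_orbit[OF self_in_cyc])

lemma cyc_subset: "x \<in> {1..m} \<Longrightarrow> cyc x \<subseteq> {1..m}"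
  by (rule permutes_orbit_subset[OF perm])

lemma cyc_fixpoint: "pi x = x \<Longrightarrow> cyc x = {x}"
  by (simp add: orbit_eq_singleton_iff)

lemma cmin_in_cyc: "cmin x \<in> cyc x"
  unfolding cmin_def by (metis Min_in finite_cyc empty_iff self_in_cyc)

lemma cmax_in_cyc: "cmax x \<in> cyc x"
  unfolding cmax_def by (metis Max_in finite_cyc empty_iff self_in_cyc)

lemma cmin_le: "y \<in> cyc x \<Longrightarrow> cmin x \<le> y"
  unfolding cmin_def by simp

lemma cmax_ge: "y \<in> cyc x \<Longrightarrow> y \<le> cmax x"
  unfolding cmax_def by simp

lemma cmin_le_self: "cmin x \<le> x" and cmax_ge_self: "x \<le> cmax x"
  by (simp_all add: cmin_le cmax_ge)

lemma cmin_eq: "y \<in> cyc x \<Longrightarrow> cmin y = cmin x"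
  unfolding cmin_def using cyc_eq by simp

lemma cmin_pi [simp]: "cmin (pi x) = cmin x"
  unfolding cmin_def by simp

lemma cmin_cmin [simp]: "cmin (cmin x) = cmin x"
  using cmin_eq[OF cmin_in_cyc] .

lemma in_cyc_cmin: "x \<in> cyc (cmin x)"
  using cyc_eq[OF cmin_in_cyc] by simp

lemma moved_cyc: "moved x \<Longrightarrow> y \<in> cyc x \<Longrightarrow> moved y"
  unfolding moved_def using cyc_subset cyc_eq cyc_fixpoint by (metis singletonD self_in_cyc subsetD)

lemma moved_pi: "moved x \<Longrightarrow> moved (pi x)"
  and moved_cmin: "moved x \<Longrightarrow> moved (cmin x)"
  and moved_cmax: "moved x \<Longrightarrow> moved (cmax x)"
  using moved_cyc pi_in_cyc cmin_in_cyc cmax_in_cyc self_in_cyc by blast+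

lemma not_moved_fixpoint: "\<not> moved x \<Longrightarrow> pi x = x"
  using pi_outside moved_def by blast

lemma cmin_in_cycle_mins: "moved x \<Longrightarrow> cmin x \<in> cycle_mins"
  using moved_cmin by (simp add: cycle_mins_def)

lemma cycle_minsD: "u \<in> cycle_mins \<Longrightarrow> moved u \<and> cmin u = u"
  by (simp add: cycle_mins_def)

lemma finite_cycle_mins: "finite cycle_mins"
  by (rule finite_subset[of _ "{1..m}"]) (auto simp: cycle_mins_def moved_def)

lemma cmin_lt_cmax: "moved x \<Longrightarrow> cmin x < cmax x"
  using cmin_le[of x x] cmax_ge[of x x] cmin_le[of "pi x" x] cmax_ge[of "pi x" x] pi_in_cyc[of x x]
  by (fastforce simp: moved_def)

lemma steps_to_min: "(pi ^^ steps_to_min x) x = cmin x"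
  unfolding steps_to_min_def by (rule funpow_dist_prop[OF cmin_in_cyc])

lemma steps_to_min_le: "(pi ^^ n) x = cmin x \<Longrightarrow> steps_to_min x \<le> n"
  unfolding steps_to_min_def funpow_dist_def by (rule Least_le)

lemma steps_to_min_eq_0_iff: "steps_to_min x = 0 \<longleftrightarrow> x = cmin x"
  unfolding steps_to_min_def using funpow_dist_0_eq[OF cmin_in_cyc] by simp

lemma steps_to_min_pi: "x \<noteq> cmin x \<Longrightarrow> steps_to_min (pi x) = steps_to_min x - 1"
  unfolding steps_to_min_def using funpow_dist_step[OF _ cmin_in_cyc] by simp

lemma steps_to_min_inj: "cmin y = cmin x \<Longrightarrow> steps_to_min y = steps_to_min x \<Longrightarrow> y = x"
proof -
  have "inj (pi ^^ steps_to_min x)"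
    using permutation_bijective[OF permutation_pi] by (simp add: bij_is_inj inj_fn)
  then show "cmin y = cmin x \<Longrightarrow> steps_to_min y = steps_to_min x \<Longrightarrow> y = x"
    using steps_to_min[of x] steps_to_min[of y] by (metis inj_eq)
qed

lemma steps_to_min_le_start:
  assumes q: "cmin q = q" and k: "k \<in> cyc q" "k \<noteq> q"
  shows "steps_to_min k \<le> steps_to_min (pi q)"
proof -
  define N where "N = steps_to_min (pi q)"
  have period: "(pi ^^ Suc N) q = q"
    using steps_to_min[of "pi q"] q by (simp add: N_def funpow_Suc_right del: funpow.simps)
  define d where "d = funpow_dist1 pi q k"
  have "d \<le> Suc N" unfolding d_def by (rule funpow_dist1_le_self[OF period _ k(1)]) simp
  have "(pi ^^ d) q = k" unfolding d_def by (rule funpow_dist1_prop[OF k(1)])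
  then have "(pi ^^ (Suc N - d)) k = (pi ^^ (Suc N - d + d)) q" by (simp add: funpow_add)
  also have "\<dots> = cmin k" using \<open>d \<le> Suc N\<close> period q cmin_eq[OF k(1)] by simp
  finally have "steps_to_min k \<le> Suc N - d" by (rule steps_to_min_le)
  then show ?thesis unfolding N_def d_def by simp
qed

definition meets :: "(nat set \<times> nat set) set" where
  "meets = {(c, d). c \<in> lor_cycles m pi \<and> d \<in> lor_cycles m pi \<and> intervals_meet c d}"

definition grp :: "nat \<Rightarrow> nat set set" where
  "grp x = group_of m pi (cyc x)"

definition grp_max :: "nat \<Rightarrow> nat" where
  "grp_max x = Max (\<Union> (grp x))"

lemma lor_cycles_iff: "c \<in> lor_cycles m pi \<longleftrightarrow> (\<exists>i. moved i \<and> c = cyc i)"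
  unfolding lor_cycles_def moved_def cycle_of_eq_orbit by auto

lemma cyc_in_lor_cycles: "moved i \<Longrightarrow> cyc i \<in> lor_cycles m pi"
  using lor_cycles_iff by blast

lemma lor_cycles_mem: "c \<in> lor_cycles m pi \<Longrightarrow> y \<in> c \<Longrightarrow> c = cyc y \<and> moved y"
  using lor_cycles_iff cyc_eq moved_cyc by metis

lemma lor_cycles_Min: "c \<in> lor_cycles m pi \<Longrightarrow> Min c \<in> cycle_mins \<and> c = cyc (Min c)"
  using lor_cycles_iff cmin_in_cycle_mins cyc_eq[OF cmin_in_cyc] by (auto simp: cmin_def)

lemma lor_cycles_subset: "c \<in> lor_cycles m pi \<Longrightarrow> c \<subseteq> {1..m}"
  using lor_cycles_iff cyc_subset moved_def by blast

lemma grp_altdef: "grp x = {d \<in> lor_cycles m pi. (cyc x, d) \<in> meets\<^sup>*}"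
  unfolding grp_def group_of_def meets_def cycle_of_eq_orbit ..

lemma grp_subset: "grp x \<subseteq> lor_cycles m pi"
  unfolding grp_altdef by auto

lemma cyc_in_grp: "moved x \<Longrightarrow> cyc x \<in> grp x"
  unfolding grp_altdef using cyc_in_lor_cycles by simp

lemma grp_eq: "cyc y \<in> grp x \<Longrightarrow> grp y = grp x"
proof -
  assume "cyc y \<in> grp x"
  then have xy: "(cyc x, cyc y) \<in> meets\<^sup>*" by (simp add: grp_altdef)
  have "sym meets"
    unfolding meets_def sym_def intervals_meet_def by (auto simp: max.commute min.commute)
  then have yx: "(cyc y, cyc x) \<in> meets\<^sup>*"
    by (rule symD[OF sym_rtrancl xy])
  show ?thesis
    unfolding grp_altdef using rtrancl_trans[OF xy] rtrancl_trans[OF yx] by blast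
qed

lemma grp_eq_if_overlap:
  assumes "moved x" "moved y" "cmin x \<le> z" "z \<le> cmax x" "cmin y \<le> z" "z \<le> cmax y"
  shows "grp y = grp x"
proof (rule grp_eq)
  have "intervals_meet (cyc x) (cyc y)"
    using assms unfolding intervals_meet_def cmin_def cmax_def by simp
  then show "cyc y \<in> grp x"
    using assms(1,2) cyc_in_lor_cycles unfolding grp_altdef meets_def by auto
qed

lemma finite_Union_grp: "finite (\<Union> (grp x))"
proof -
  have "\<Union> (grp x) \<subseteq> {1..m}" using grp_subset lor_cycles_subset by blast
  then show ?thesis using finite_subset by blast
qed

lemma le_grp_max: "moved x \<Longrightarrow> y \<in> cyc x \<Longrightarrow> y \<le> grp_max x"
  unfolding grp_max_def using cyc_in_grp finite_Union_grp by (meson Max_ge UnionI)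

lemma cmax_le_grp_max: "moved x \<Longrightarrow> cmax x \<le> grp_max x"
  and self_le_grp_max: "moved x \<Longrightarrow> x \<le> grp_max x"
  using le_grp_max cmax_in_cyc self_in_cyc by blast+

lemma grp_max_mem: "moved x \<Longrightarrow> grp_max x \<in> \<Union> (grp x)"
  unfolding grp_max_def using cyc_in_grp self_in_cyc by (intro Max_in[OF finite_Union_grp]) blast

lemma moved_grp_max: "moved x \<Longrightarrow> moved (grp_max x)"
  and grp_grp_max: "moved x \<Longrightarrow> grp (grp_max x) = grp x"
  using grp_max_mem lor_cycles_mem grp_subset grp_eq by blast+

lemma grp_max_idem: "moved x \<Longrightarrow> grp_max (grp_max x) = grp_max x"
  using grp_grp_max by (simp add: grp_max_def)

lemma grp_max_pi [simp]: "grp_max (pi x) = grp_max x"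
  unfolding grp_max_def grp_def by simp

lemma not_straddle_grp_max:
  assumes "moved x" "moved y" "cmin y \<le> grp_max x" "grp_max x < cmax y"
  shows False
proof -
  let ?P = "grp_max x"
  have "grp y = grp ?P"
    using grp_eq_if_overlap[of ?P y ?P] moved_grp_max[OF assms(1)] assms(2-4)
      cmin_le_self[of ?P] cmax_ge_self[of ?P] by simp
  then have "grp_max y = grp_max x"
    using grp_grp_max[OF assms(1)] by (simp add: grp_max_def)
  then show False using cmax_le_grp_max[OF assms(2)] assms(4) by simp
qed

lemma cmin_grp_max_less: "moved x \<Longrightarrow> cmin (grp_max x) < grp_max x"
  by (metis cmax_le_grp_max cmin_lt_cmax grp_max_idem moved_grp_max order_less_le_trans)

lemma grp_max_notin_cycle_mins: "moved x \<Longrightarrow> grp_max x \<notin> cycle_mins"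
  using cmin_grp_max_less cycle_minsD by fastforce

lemma grp_max_le:
  assumes x: "moved x" "cmin x \<le> V" and closed: "\<And>i. moved i \<Longrightarrow> cmin i \<le> V \<Longrightarrow> cmax i \<le> V"
  shows "grp_max x \<le> V"
proof -
  have reach: "Max d \<le> V" if "(cyc x, d) \<in> meets\<^sup>*" "d \<in> lor_cycles m pi" for d
    using that
  proof (induction rule: rtrancl_induct)
    case base
    then show ?case using closed x by (simp add: cmax_def)
  next
    case (step c d)
    then have "c \<in> lor_cycles m pi" "intervals_meet c d" by (auto simp: meets_def)
    then have "Max c \<le> V" "Min d \<le> Max c" using step by (auto simp: intervals_meet_def)
    moreover obtain i where "moved i" "d = cyc i" using step.prems lor_cycles_iff by blast
    ultimately show ?case using closed by (simp add: cmin_def cmax_def)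
  qed
  have "z \<le> V" if "z \<in> \<Union> (grp x)" for z
  proof -
    from that obtain d where d: "d \<in> lor_cycles m pi" "(cyc x, d) \<in> meets\<^sup>*" "z \<in> d"
      by (auto simp: grp_altdef)
    then have "finite d" using lor_cycles_subset finite_subset by blast
    then show ?thesis using d reach Max_ge order_trans by blast
  qed
  then show ?thesis using grp_max_mem[OF x(1)] by blast
qed

section \<open>A lower bound on the number of pick-n-swaps\<close>

lemma card_lor_cycles: "card (lor_cycles m pi) = card cycle_mins"
proof (rule bij_betw_same_card)
  show "bij_betw Min (lor_cycles m pi) cycle_mins"
  proof (rule bij_betw_imageI)
    show "inj_on Min (lor_cycles m pi)" using lor_cycles_Min by (metis inj_onI)
    have "cycle_mins \<subseteq> Min ` lor_cycles m pi"
      using cycle_minsD cyc_in_lor_cycles by (force simp: cmin_def)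
    then show "Min ` lor_cycles m pi = cycle_mins" using lor_cycles_Min by blast
  qed
qed

lemma finite_lor_cycles: "finite (lor_cycles m pi)"
proof -
  have "lor_cycles m pi \<subseteq> Pow {1..m}" using lor_cycles_subset by blast
  then show ?thesis by (rule finite_subset) simp
qed

lemma valid_plan_visits_moved: "valid_plan m pi ps \<Longrightarrow> moved i \<Longrightarrow> i \<in> set ps"
  using exec_plan_unvisited[of i ps pi] by (force simp: valid_plan_def moved_def)

lemma valid_plan_last_visits:
  assumes "valid_plan m pi ps"
  obtains L where "\<And>i. moved i \<Longrightarrow> L i < length ps \<and> ps ! L i = i \<and> i \<notin> set (drop (Suc (L i)) ps)"
proof -
  have "\<forall>i. \<exists>j. moved i \<longrightarrow> j < length ps \<and> ps ! j = i \<and> i \<notin> set (drop (Suc j) ps)"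
    using last_occurrence valid_plan_visits_moved[OF assms] by metis
  then show ?thesis using that by metis
qed

lemma valid_plan_first_visits:
  assumes "valid_plan m pi ps"
  obtains F where "\<And>c. c \<in> lor_cycles m pi \<Longrightarrow> F c < length ps \<and> ps ! F c \<in> c \<and> (\<forall>j<F c. ps ! j \<notin> c)"
proof -
  have "\<exists>j<length ps. ps ! j \<in> c \<and> (\<forall>j'<j. ps ! j' \<notin> c)" if "c \<in> lor_cycles m pi" for c
  proof -
    have "Min c \<in> set ps" "Min c \<in> c"
      using that lor_cycles_Min cycle_minsD valid_plan_visits_moved[OF assms] self_in_cyc by metis+
    then show ?thesis using first_occurrence[of ps "\<lambda>y. y \<in> c"] by metis
  qed
  then show ?thesis using that by metis
qed

lemma last_visit_not_first_in_cycle: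
  assumes valid: "valid_plan m pi ps"
    and j: "j < length ps" "ps ! j = i" "i \<notin> set (drop (Suc j) ps)"
    and i: "moved i"
  obtains j' where "j' < j" "ps ! j' \<in> cyc i"
proof -
  have "snd (exec_plan pi (take j ps)) = Some i"
    using exec_plan_last_visit[OF j, of pi] valid i by (simp add: valid_plan_def moved_def)
  then obtain k where "k \<in> set (take j ps)" "i = pi k"
    using held_item_from_visited_cell by blast
  then show ?thesis
    using that
    by (metis in_cyc_pi_iff in_set_conv_nth length_take min_less_iff_conj nth_take self_in_cyc)
qed

lemma valid_plan_length_ge:
  assumes valid: "valid_plan m pi ps"
  shows "card {i. moved i} + card cycle_mins \<le> length ps"
proof -
  define N where "N = length ps"
  obtain L where L: "\<And>i. moved i \<Longrightarrow> L i < N \<and> ps ! L i = i \<and> i \<notin> set (drop (Suc (L i)) ps)"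
    using valid_plan_last_visits[OF valid] unfolding N_def by blast
  obtain F where F: "\<And>c. c \<in> lor_cycles m pi \<Longrightarrow> F c < N \<and> ps ! F c \<in> c \<and> (\<forall>j<F c. ps ! j \<notin> c)"
    using valid_plan_first_visits[OF valid] unfolding N_def by blast
  have disjoint: "L ` {i. moved i} \<inter> F ` lor_cycles m pi = {}"
  proof (intro equals0I, elim IntE imageE)
    fix j i c assume i: "j = L i" "i \<in> {i. moved i}" and c: "j = F c" "c \<in> lor_cycles m pi"
    then have "c = cyc i" using L F lor_cycles_mem by (metis mem_Collect_eq)
    then show False
      using last_visit_not_first_in_cycle[OF valid, of "L i" i] L[of i] F[of c] i c
      unfolding N_def by auto
  qed
  have "inj_on L {i. moved i}" using L by (metis inj_onI mem_Collect_eq)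
  moreover have "inj_on F (lor_cycles m pi)" using F lor_cycles_mem by (metis inj_onI)
  moreover have "finite {i. moved i}" by (rule finite_subset[of _ "{1..m}"]) (auto simp: moved_def)
  ultimately have
    "card (L ` {i. moved i} \<union> F ` lor_cycles m pi) = card {i. moved i} + card cycle_mins"
    using disjoint finite_lor_cycles by (simp add: card_Un_disjoint card_image card_lor_cycles)
  moreover have "L ` {i. moved i} \<union> F ` lor_cycles m pi \<subseteq> {..<N}" using L F by auto
  then have "card (L ` {i. moved i} \<union> F ` lor_cycles m pi) \<le> N"
    by (metis card_lessThan card_mono finite_lessThan)
  ultimately show ?thesis unfolding N_def by simp
qed

lemma Min_lor_cycles_eq: "{Min c | c. c \<in> lor_cycles m pi \<and> P c} = {u \<in> cycle_mins. P (cyc u)}"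
proof -
  have "u \<in> {Min c | c. c \<in> lor_cycles m pi \<and> P c}" if "u \<in> cycle_mins" "P (cyc u)" for u
    using that cycle_minsD[of u] cyc_in_lor_cycles[of u] by (force simp: cmin_def)
  then show ?thesis using lor_cycles_Min by fastforce
qed

definition mins_right :: "nat \<Rightarrow> nat set" where
  "mins_right p = {u \<in> cycle_mins. p < u}"

definition unstarted_in_grp :: "nat set \<Rightarrow> nat \<Rightarrow> nat set" where
  "unstarted_in_grp S t = {u \<in> cycle_mins - S. cyc u \<in> grp t}"

definition leaves_grp :: "nat \<Rightarrow> bool" where
  "leaves_grp p \<longleftrightarrow> moved p \<and> grp_max p = p \<and> mins_right p \<noteq> {}"

definition passes_unstarted :: "nat \<Rightarrow> nat set \<Rightarrow> nat \<Rightarrow> bool" where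
  "passes_unstarted p S t \<longleftrightarrow>
     unstarted_in_grp S t \<noteq> {} \<and> strictly_between p (Min (unstarted_in_grp S t)) t"

lemma opt_step_idle:
  "opt_step m pi (p, None, S, stk) =
     (if cycle_mins - S = {} then None
      else Some (start_cycle pi (Min (cycle_mins - S)) S stk None))"
proof -
  have eq: "{Min c | c. c \<in> lor_cycles m pi \<and> Min c \<notin> S} = cycle_mins - S" for S
    using Min_lor_cycles_eq[of "\<lambda>c. Min c \<notin> S"] by (auto simp: cycle_mins_def cmin_def)
  show ?thesis unfolding opt_step_def Let_def eq by simp
qed

lemma opt_step_carrying:
  "opt_step m pi (p, Some t, S, stk) =
     (if leaves_grp p then
        Some (start_cycle pi (Min (mins_right p)) S stk (Some t))
      else if passes_unstarted p S t then
        Some (start_cycle pi (Min (unstarted_in_grp S t)) S stk (Some t))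
      else Some (t,
        if t = cmin t then
          (case stk of
             (c, t') # rest \<Rightarrow> if c = t then (t, Some t', S, rest) else (t, None, S, stk)
           | [] \<Rightarrow> (t, None, S, stk))
        else (t, Some (pi t), S, stk)))"
proof -
  have right: "{Min c | c. c \<in> lor_cycles m pi \<and> p < Min c} = mins_right p" for p
    using Min_lor_cycles_eq[of "\<lambda>c. p < Min c"]
    by (auto simp: mins_right_def cycle_mins_def cmin_def)
  have unstarted: "{Min c | c. c \<in> grp t \<and> Min c \<notin> S} = unstarted_in_grp S t"
    for S t
    using Min_lor_cycles_eq[of "\<lambda>c. c \<in> grp t \<and> Min c \<notin> S"] grp_subset[of t]
    by (auto simp: unstarted_in_grp_def cycle_mins_def cmin_def)
  have "pi p \<noteq> p \<longleftrightarrow> moved p" for p using pi_outside moved_def by blast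
  then show ?thesis
    unfolding opt_step_def Let_def cycle_of_eq_orbit right unstarted
      grp_def[symmetric] grp_max_def[symmetric] cmin_def[symmetric]
    by (simp add: leaves_grp_def passes_unstarted_def)
qed

section \<open>The invariant of OptPlanLOR\<close>

fun parked_chain :: "arrangement \<Rightarrow> nat \<Rightarrow> (nat \<times> nat) list \<Rightarrow> bool" where
  "parked_chain arr g [] \<longleftrightarrow> arr (cmin g) = None"
| "parked_chain arr g ((c, t) # stk) \<longleftrightarrow>
     c = cmin g \<and> arr c = Some t \<and> cmin t < c \<and> parked_chain arr t stk"

definition goals :: "nat option \<Rightarrow> (nat \<times> nat) list \<Rightarrow> nat list" where
  "goals h stk = (case h of None \<Rightarrow> [] | Some t \<Rightarrow> t # map snd stk)"

lemma goals_None [simp]: "goals None stk = []"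
  and goals_Some [simp]: "goals (Some t) stk = t # map snd stk"
  by (simp_all add: goals_def)

text \<open>The cycles with minimum in S have been started, and G holds the goals toward which
  cycles are being followed. In such a cycle, followed toward g, the cells that cycle following
  has not reached yet (at most as many steps from the minimum as g) still hold their initial
  items and the others are sorted.\<close>

definition cycle_layout :: "nat set \<Rightarrow> nat set \<Rightarrow> arrangement \<Rightarrow> bool" where
  "cycle_layout S G arr \<longleftrightarrow>
     (\<forall>k\<in>{1..m}. cmin k \<notin> S \<longrightarrow> arr k = Some (pi k)) \<and>
     (\<forall>k\<in>{1..m}. cmin k \<in> S \<longrightarrow> cmin k \<notin> cmin ` G \<longrightarrow> arr k = Some k) \<and>
     (\<forall>k\<in>{1..m}. \<forall>g\<in>G. cmin g = cmin k \<longrightarrow> k \<noteq> cmin k \<longrightarrow>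
        arr k = (if steps_to_min k \<le> steps_to_min g then Some (pi k) else Some k))"

text \<open>In the algorithm state (p, h, S, stk), h is the held item and stk lists the parked items
  with their cells; an item is identified with its goal. The minimum cell of a cycle being
  followed holds the item parked there when the cycle was entered, or nothing for the
  outermost cycle.\<close>

definition cells_inv ::
    "nat option \<Rightarrow> nat set \<Rightarrow> (nat \<times> nat) list \<Rightarrow> arrangement \<Rightarrow> nat option \<Rightarrow> bool"
  where
  "cells_inv h S stk arr hand \<longleftrightarrow>
     hand = h \<and>
     (h = None \<longrightarrow> stk = []) \<and>
     (\<forall>t. h = Some t \<longrightarrow> parked_chain arr t stk) \<and>
     (\<forall>g\<in>set (goals h stk). moved g \<and> cmin g \<in> S) \<and>
     cycle_layout S (set (goals h stk)) arr"

text \<open>V is the rightmost cell visited so far (0 before the first move).\<close>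

definition sweep_inv :: "nat \<Rightarrow> nat option \<Rightarrow> nat set \<Rightarrow> (nat \<times> nat) list \<Rightarrow> arrangement \<Rightarrow> nat \<Rightarrow> bool"
  where
  "sweep_inv p h S stk arr V \<longleftrightarrow>
     {u \<in> cycle_mins. u \<le> V} = S \<and>
     (\<forall>k\<in>{1..m}. V < k \<longrightarrow> arr k = Some (pi k)) \<and>
     (\<forall>t. h = Some t \<longrightarrow> cmin t \<le> p \<and> p \<le> V) \<and>
     (h \<noteq> None \<longrightarrow> arr p = Some p \<or> p \<in> S) \<and>
     (h \<noteq> None \<longrightarrow> moved p \<longrightarrow> grp_max p = p \<longrightarrow> V = p) \<and>
     (\<forall>g\<in>set (goals h stk). V \<le> grp_max g \<or> arr (grp_max g) = Some (grp_max g)) \<and>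
     (\<forall>x. moved x \<longrightarrow> grp_max x = x \<longrightarrow> arr x = Some x \<longrightarrow> (\<exists>u\<in>cycle_mins. x < u) \<longrightarrow>
        (\<exists>s\<in>S. x < s) \<or> (p = x \<and> h \<noteq> None)) \<and>
     (V = 0 \<or> moved V \<and> cmin V \<in> S)"

definition opt_inv ::
    "nat \<Rightarrow> nat option \<Rightarrow> nat set \<Rightarrow> (nat \<times> nat) list \<Rightarrow> arrangement \<Rightarrow> nat option \<Rightarrow> nat \<Rightarrow> bool"
  where
  "opt_inv p h S stk arr hand V \<longleftrightarrow> cells_inv h S stk arr hand \<and> sweep_inv p h S stk arr V"

lemma cycle_layoutI:
  assumes "\<And>k. k \<in> {1..m} \<Longrightarrow> cmin k \<notin> S \<Longrightarrow> arr k = Some (pi k)"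
    and "\<And>k. k \<in> {1..m} \<Longrightarrow> cmin k \<in> S \<Longrightarrow> cmin k \<notin> cmin ` G \<Longrightarrow> arr k = Some k"
    and "\<And>k g. k \<in> {1..m} \<Longrightarrow> g \<in> G \<Longrightarrow> cmin g = cmin k \<Longrightarrow> k \<noteq> cmin k \<Longrightarrow>
           arr k = (if steps_to_min k \<le> steps_to_min g then Some (pi k) else Some k)"
  shows "cycle_layout S G arr"
  unfolding cycle_layout_def by (intro assms conjI impI allI ballI; assumption?)

lemma
  assumes "cycle_layout S G arr"
  shows layout_unstarted: "k \<in> {1..m} \<Longrightarrow> cmin k \<notin> S \<Longrightarrow> arr k = Some (pi k)"
    and layout_finished: "k \<in> {1..m} \<Longrightarrow> cmin k \<in> S \<Longrightarrow> cmin k \<notin> cmin ` G \<Longrightarrow> arr k = Some k"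
    and layout_active: "k \<in> {1..m} \<Longrightarrow> g \<in> G \<Longrightarrow> cmin g = cmin k \<Longrightarrow> k \<noteq> cmin k \<Longrightarrow>
           arr k = (if steps_to_min k \<le> steps_to_min g then Some (pi k) else Some k)"
  using assms by (simp_all add: cycle_layout_def)

lemma cells_invI:
  assumes "hand = h"
    and "h = None \<Longrightarrow> stk = []"
    and "\<And>t. h = Some t \<Longrightarrow> parked_chain arr t stk"
    and "\<And>g. g \<in> set (goals h stk) \<Longrightarrow> moved g \<and> cmin g \<in> S"
    and "cycle_layout S (set (goals h stk)) arr"
  shows "cells_inv h S stk arr hand"
  unfolding cells_inv_def by (intro assms conjI impI allI ballI; assumption?)

lemma
  assumes "cells_inv h S stk arr hand"
  shows cells_hand: "hand = h"
    and cells_idle: "h = None \<Longrightarrow> stk = []"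
    and cells_chain: "h = Some t \<Longrightarrow> parked_chain arr t stk"
    and cells_goals: "g \<in> set (goals h stk) \<Longrightarrow> moved g \<and> cmin g \<in> S"
    and cells_layout: "cycle_layout S (set (goals h stk)) arr"
  using assms by (simp_all add: cells_inv_def)

lemmas cells_unstarted = layout_unstarted[OF cells_layout]
  and cells_finished = layout_finished[OF cells_layout]
  and cells_active = layout_active[OF cells_layout]

lemma sweep_invI:
  assumes "{u \<in> cycle_mins. u \<le> V} = S"
    and "\<And>k. k \<in> {1..m} \<Longrightarrow> V < k \<Longrightarrow> arr k = Some (pi k)"
    and "\<And>t. h = Some t \<Longrightarrow> cmin t \<le> p \<and> p \<le> V"
    and "h \<noteq> None \<Longrightarrow> arr p = Some p \<or> p \<in> S"
    and "h \<noteq> None \<Longrightarrow> moved p \<Longrightarrow> grp_max p = p \<Longrightarrow> V = p"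
    and "\<And>g. g \<in> set (goals h stk) \<Longrightarrow> V \<le> grp_max g \<or> arr (grp_max g) = Some (grp_max g)"
    and "\<And>x. moved x \<Longrightarrow> grp_max x = x \<Longrightarrow> arr x = Some x \<Longrightarrow> \<exists>u\<in>cycle_mins. x < u \<Longrightarrow>
           (\<exists>s\<in>S. x < s) \<or> (p = x \<and> h \<noteq> None)"
    and "V = 0 \<or> moved V \<and> cmin V \<in> S"
  shows "sweep_inv p h S stk arr V"
  unfolding sweep_inv_def by (intro assms conjI impI allI ballI; assumption?)

lemma
  assumes "sweep_inv p h S stk arr V"
  shows sweep_started: "{u \<in> cycle_mins. u \<le> V} = S"
    and sweep_beyond: "k \<in> {1..m} \<Longrightarrow> V < k \<Longrightarrow> arr k = Some (pi k)"
    and sweep_window: "h = Some t \<Longrightarrow> cmin t \<le> p \<and> p \<le> V"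
    and sweep_current: "h \<noteq> None \<Longrightarrow> arr p = Some p \<or> p \<in> S"
    and sweep_at_grp_max: "h \<noteq> None \<Longrightarrow> moved p \<Longrightarrow> grp_max p = p \<Longrightarrow> V = p"
    and sweep_goal_grp: "g \<in> set (goals h stk) \<Longrightarrow> V \<le> grp_max g \<or> arr (grp_max g) = Some (grp_max g)"
    and sweep_sorted_grp_max: "moved x \<Longrightarrow> grp_max x = x \<Longrightarrow> arr x = Some x \<Longrightarrow> \<exists>u\<in>cycle_mins. x < u \<Longrightarrow>
           (\<exists>s\<in>S. x < s) \<or> (p = x \<and> h \<noteq> None)"
    and sweep_frontier: "V = 0 \<or> moved V \<and> cmin V \<in> S"
  using assms by (simp_all add: sweep_inv_def)

lemma parked_chain_cong: "parked_chain arr g stk \<Longrightarrow> cmin g' = cmin g \<Longrightarrow> parked_chain arr g' stk"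
  by (cases stk) auto

lemma parked_chain_update:
  "parked_chain arr g stk \<Longrightarrow> (\<And>y. y \<in> cmin ` set (g # map snd stk) \<Longrightarrow> arr' y = arr y)
   \<Longrightarrow> parked_chain arr' g stk"
  by (induction arr g stk rule: parked_chain.induct) auto

lemma parked_chain_cmin_less:
  "parked_chain arr g stk \<Longrightarrow> g' \<in> set (map snd stk) \<Longrightarrow> cmin g' < cmin g"
  by (induction arr g stk rule: parked_chain.induct) fastforce+

lemma goal_cell_unsorted:
  assumes C: "cells_inv (Some t) S stk arr hand"
  shows "arr t \<noteq> Some t"
proof (cases "t = cmin t")
  case False
  have "moved t" using cells_goals[OF C, of t] by simp
  then show ?thesis using cells_active[OF C, of t t] False by (simp add: moved_def)
next
  case True
  then show ?thesis
    using cells_chain[OF C] by (cases stk) (auto simp del: cmin_cmin)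
qed

lemma
  assumes "sweep_inv p h S stk arr V"
  shows started_subset: "S \<subseteq> cycle_mins"
    and started_le: "u \<in> S \<Longrightarrow> u \<le> V"
    and unstarted_gt: "u \<in> cycle_mins \<Longrightarrow> u \<notin> S \<Longrightarrow> V < u"
  using sweep_started[OF assms] by auto

text \<open>The rightmost visited cell ends a sorted group, so a cycle to its right would contradict
  the condition on sorted group maxima in sweep_inv.\<close>

lemma idle_all_started:
  assumes C: "cells_inv None S [] arr None" and W: "sweep_inv p None S [] arr V" and "V > 0"
  shows "cycle_mins \<subseteq> S"
proof (rule subsetI, rule ccontr)
  fix u assume u: "u \<in> cycle_mins" "u \<notin> S"
  have V: "moved V" "cmin V \<in> S" using sweep_frontier[OF W] \<open>V > 0\<close> by auto
  have sorted: "arr k = Some k" if "k \<in> {1..m}" "cmin k \<in> S" for k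
    using cells_finished[OF C that] by simp
  have "cmax i \<le> V" if i: "moved i" "cmin i \<le> V" for i
  proof (rule ccontr)
    assume "\<not> cmax i \<le> V"
    have "cmin i \<in> S" using sweep_started[OF W] i cmin_in_cycle_mins by auto
    moreover have "moved (cmax i)" "cmin (cmax i) = cmin i" using moved_cmax i cmin_eq cmax_in_cyc
      by auto
    ultimately have "arr (cmax i) = Some (cmax i)" using sorted by (simp add: moved_def)
    moreover have "arr (cmax i) = Some (pi (cmax i))"
      using sweep_beyond[OF W] \<open>\<not> cmax i \<le> V\<close> \<open>moved (cmax i)\<close> by (simp add: moved_def)
    ultimately show False using \<open>moved (cmax i)\<close> by (simp add: moved_def)
  qed
  then have "grp_max V \<le> V" using grp_max_le[OF V(1) cmin_le_self] by blast
  then have "grp_max V = V" using self_le_grp_max[OF V(1)] by simp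
  moreover have "arr V = Some V" using sorted V by (simp add: moved_def)
  moreover have "V < u" using unstarted_gt[OF W u] .
  ultimately have "\<exists>s\<in>S. V < s" using sweep_sorted_grp_max[OF W V(1)] u by blast
  then show False using started_le[OF W] by fastforce
qed

definition work_left :: "arrangement \<Rightarrow> nat set \<Rightarrow> nat" where
  "work_left arr S = card {k \<in> {1..m}. arr k \<noteq> Some k} + card (cycle_mins - S)"

lemma work_left_start:
  assumes "q \<in> cycle_mins" "q \<notin> S" "arr q \<noteq> Some q" "v \<noteq> Some q"
  shows "work_left (arr(q := v)) (insert q S) + 1 = work_left arr S"
proof -
  have "{k \<in> {1..m}. (arr(q := v)) k \<noteq> Some k} = {k \<in> {1..m}. arr k \<noteq> Some k}"
    using assms by auto
  moreover have "card (cycle_mins - S) = Suc (card (cycle_mins - insert q S))"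
  proof -
    have "Suc (card ((cycle_mins - S) - {q})) = card (cycle_mins - S)"
      using assms(1,2) finite_cycle_mins by (intro card_Suc_Diff1) simp_all
    moreover have "(cycle_mins - S) - {q} = cycle_mins - insert q S" by auto
    ultimately show ?thesis by simp
  qed
  ultimately show ?thesis unfolding work_left_def by simp
qed

lemma work_left_place:
  assumes "t \<in> {1..m}" "arr t \<noteq> Some t"
  shows "work_left (arr(t := Some t)) S + 1 = work_left arr S"
proof -
  have "{k \<in> {1..m}. arr k \<noteq> Some k} = insert t {k \<in> {1..m}. (arr(t := Some t)) k \<noteq> Some k}"
    using assms by auto
  then show ?thesis unfolding work_left_def by simp
qed

lemma layout_start:
  assumes L: "cycle_layout S G arr" and q: "q \<in> cycle_mins" "q \<notin> S"
    and G: "\<And>g. g \<in> G \<Longrightarrow> cmin g \<in> S"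
  shows "cycle_layout (insert q S) (insert (pi q) G) (arr(q := v))"
proof -
  have q': "cmin q = q" using cycle_minsD[OF q(1)] by simp
  show ?thesis
  proof (rule cycle_layoutI)
    fix k assume "k \<in> {1..m}" "cmin k \<notin> insert q S"
    then show "(arr(q := v)) k = Some (pi k)" using layout_unstarted[OF L] q' by auto
  next
    fix k assume k: "k \<in> {1..m}" "cmin k \<in> insert q S" "cmin k \<notin> cmin ` insert (pi q) G"
    then have "k \<noteq> q" "cmin k \<in> S" using q' by auto
    then show "(arr(q := v)) k = Some k" using layout_finished[OF L] k by simp
  next
    fix k g assume k: "k \<in> {1..m}" "g \<in> insert (pi q) G" "cmin g = cmin k" "k \<noteq> cmin k"
    show "(arr(q := v)) k = (if steps_to_min k \<le> steps_to_min g then Some (pi k) else Some k)"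
    proof (cases "g \<in> G")
      case True
      then have "k \<noteq> q" using G k(3) q(2) q' by force
      then show ?thesis using layout_active[OF L k(1) True k(3,4)] by simp
    next
      case False
      then have "g = pi q" "cmin k = q" "k \<noteq> q" using k q' by auto
      then have "steps_to_min k \<le> steps_to_min g"
        using steps_to_min_le_start[OF q'] in_cyc_cmin[of k] by simp
      then show ?thesis using layout_unstarted[OF L k(1)] \<open>cmin k = q\<close> \<open>k \<noteq> q\<close> q(2) by simp
    qed
  qed
qed

lemma layout_carry:
  assumes L: "cycle_layout S G arr" and t: "t \<in> G" "t \<noteq> cmin t" "cmin t \<in> S"
    and G: "\<And>g. g \<in> G - {t} \<Longrightarrow> cmin g \<noteq> cmin t"
  shows "cycle_layout S (insert (pi t) (G - {t})) (arr(t := Some t))"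
proof (rule cycle_layoutI)
  fix k assume "k \<in> {1..m}" "cmin k \<notin> S"
  then show "(arr(t := Some t)) k = Some (pi k)" using layout_unstarted[OF L] t(3) by auto
next
  fix k assume k: "k \<in> {1..m}" "cmin k \<in> S" "cmin k \<notin> cmin ` insert (pi t) (G - {t})"
  then have "k \<noteq> t" "cmin k \<notin> cmin ` G" using t(1) by auto
  then show "(arr(t := Some t)) k = Some k" using layout_finished[OF L] k by simp
next
  fix k g assume k: "k \<in> {1..m}" "g \<in> insert (pi t) (G - {t})" "cmin g = cmin k" "k \<noteq> cmin k"
  have steps_pi: "steps_to_min (pi t) = steps_to_min t - 1" "0 < steps_to_min t"
    using steps_to_min_pi[OF t(2)] steps_to_min_eq_0_iff[of t] t(2) by auto
  show "(arr(t := Some t)) k = (if steps_to_min k \<le> steps_to_min g then Some (pi k) else Some k)"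
  proof (cases "g = pi t")
    case True
    show ?thesis
    proof (cases "k = t")
      case False
      then have "steps_to_min k \<noteq> steps_to_min t" using steps_to_min_inj k(3) True by force
      then show ?thesis using layout_active[OF L k(1) t(1)] k(3,4) True False steps_pi by auto
    qed (use True steps_pi in auto)
  next
    case False
    then have "g \<in> G - {t}" using k(2) by simp
    then have "k \<noteq> t" using G k(3) by force
    then show ?thesis using layout_active[OF L k(1) _ k(3,4)] \<open>g \<in> G - {t}\<close> by simp
  qed
qed

lemma layout_close:
  assumes L: "cycle_layout S G arr" and t: "t \<in> G" "t = cmin t" "t \<in> S"
    and G: "\<And>g. g \<in> G - {t} \<Longrightarrow> cmin g \<noteq> t"
  shows "cycle_layout S (G - {t}) (arr(t := Some t))"
proof (rule cycle_layoutI)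
  fix k assume "k \<in> {1..m}" "cmin k \<notin> S"
  then show "(arr(t := Some t)) k = Some (pi k)" using layout_unstarted[OF L] t(2,3) by auto
next
  fix k assume k: "k \<in> {1..m}" "cmin k \<in> S" "cmin k \<notin> cmin ` (G - {t})"
  show "(arr(t := Some t)) k = Some k"
  proof (cases "cmin k = t")
    case True
    show ?thesis
    proof (cases "k = t")
      case False
      then have "steps_to_min t = 0" "steps_to_min k \<noteq> 0"
        using True t(2) steps_to_min_eq_0_iff by auto
      then show ?thesis using layout_active[OF L k(1) t(1)] True t(2) False by simp
    qed simp
  next
    case False
    then have "k \<noteq> t" "cmin k \<notin> cmin ` G" using k(3) t(2) by auto
    then show ?thesis using layout_finished[OF L k(1,2)] by simp
  qed
next
  fix k g assume k: "k \<in> {1..m}" "g \<in> G - {t}" "cmin g = cmin k" "k \<noteq> cmin k"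
  then have "k \<noteq> t" using G t(2) by force
  then show "(arr(t := Some t)) k = (if steps_to_min k \<le> steps_to_min g then Some (pi k) else Some k)"
    using layout_active[OF L k(1) _ k(3,4)] k(2) by simp
qed

lemma parked_chain_start:
  assumes C: "cells_inv h S stk arr hand"
    and q: "q \<in> cycle_mins" "q \<notin> S" and parked: "\<And>t. h = Some t \<Longrightarrow> cmin t < q"
  shows "parked_chain (arr(q := hand)) (pi q) (case h of None \<Rightarrow> stk | Some t \<Rightarrow> (q, t) # stk)"
proof (cases h)
  case None
  then show ?thesis using cells_idle[OF C] cells_hand[OF C] cycle_minsD[OF q(1)] by simp
next
  case (Some t)
  have q_no_goal: "q \<notin> cmin ` set (goals h stk)" using cells_goals[OF C] q(2) by force
  have "parked_chain (arr(q := hand)) t stk"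
    by (rule parked_chain_update[OF cells_chain[OF C Some]]) (use q_no_goal Some in auto)
  then show ?thesis using Some cells_hand[OF C] cycle_minsD[OF q(1)] parked[OF Some] by simp
qed

lemma cells_start:
  assumes C: "cells_inv h S stk arr hand"
    and q: "q \<in> cycle_mins" "q \<notin> S" and parked: "\<And>t. h = Some t \<Longrightarrow> cmin t < q"
  defines "stk' \<equiv> case h of None \<Rightarrow> stk | Some t \<Rightarrow> (q, t) # stk"
  shows "cells_inv (Some (pi q)) (insert q S) stk' (arr(q := hand)) (arr q)"
proof -
  have q': "moved q" "cmin q = q" "q \<in> {1..m}" using cycle_minsD[OF q(1)] by (auto simp: moved_def)
  have goals': "set (goals (Some (pi q)) stk') = insert (pi q) (set (goals h stk))"
    using cells_idle[OF C] unfolding stk'_def by (cases h) auto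
  show ?thesis
  proof (rule cells_invI)
    show "arr q = Some (pi q)" using cells_unstarted[OF C q'(3)] q(2) q'(2) by simp
    show "parked_chain (arr(q := hand)) t' stk'" if "Some (pi q) = Some t'" for t'
      using parked_chain_start[OF C q parked] that by (simp add: stk'_def)
    show "moved g \<and> cmin g \<in> insert q S" if "g \<in> set (goals (Some (pi q)) stk')" for g
      using that cells_goals[OF C] moved_pi[OF q'(1)] q'(2) unfolding goals' by auto
    show "cycle_layout (insert q S) (set (goals (Some (pi q)) stk')) (arr(q := hand))"
      unfolding goals' using cells_goals[OF C] by (intro layout_start[OF cells_layout[OF C] q]) simp
  qed simp
qed

lemma sweep_start:
  assumes C: "cells_inv h S stk arr hand" and W: "sweep_inv p h S stk arr V"
    and q: "q \<in> cycle_mins" "V \<le> q" "insert q S = {u \<in> cycle_mins. u \<le> q}"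
    and goal_grp: "\<And>g. g \<in> set (goals h stk) \<Longrightarrow> q \<le> grp_max g \<or> arr (grp_max g) = Some (grp_max g)"
    and sorted_grp_max: "\<And>x. moved x \<Longrightarrow> grp_max x = x \<Longrightarrow> arr x = Some x \<Longrightarrow> \<exists>u\<in>cycle_mins. x < u \<Longrightarrow>
          \<exists>s\<in>insert q S. x < s"
  defines "stk' \<equiv> case h of None \<Rightarrow> stk | Some t \<Rightarrow> (q, t) # stk"
  shows "sweep_inv q (Some (pi q)) (insert q S) stk' (arr(q := hand)) q"
proof -
  have q': "moved q" "cmin q = q" using cycle_minsD[OF q(1)] by auto
  have grp_max_ne: "grp_max g \<noteq> q" if "moved g" for g
    using grp_max_notin_cycle_mins[OF that] q(1) by auto
  have goals': "set (goals (Some (pi q)) stk') = insert (pi q) (set (goals h stk))"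
    using cells_idle[OF C] unfolding stk'_def by (cases h) auto
  show ?thesis
  proof (rule sweep_invI)
    show "{u \<in> cycle_mins. u \<le> q} = insert q S" using q(3) by simp
    show "(arr(q := hand)) k = Some (pi k)" if "k \<in> {1..m}" "q < k" for k
      using sweep_beyond[OF W that(1)] that q(2) by simp
    show "cmin t \<le> q \<and> q \<le> q" if "Some (pi q) = Some t" for t
      using that q'(2) by auto
    show "(arr(q := hand)) q = Some q \<or> q \<in> insert q S" by simp
    show "q = q" ..
    show "q = 0 \<or> moved q \<and> cmin q \<in> insert q S" using q' by simp
    fix g assume g: "g \<in> set (goals (Some (pi q)) stk')"
    show "q \<le> grp_max g \<or> (arr(q := hand)) (grp_max g) = Some (grp_max g)"
    proof (cases "g = pi q")
      case True
      then show ?thesis using self_le_grp_max[OF q'(1)] by simp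
    next
      case False
      then have "g \<in> set (goals h stk)" using g[unfolded goals'] by auto
      then show ?thesis using goal_grp grp_max_ne cells_goals[OF C] by auto
    qed
  next
    fix x assume x: "moved x" "grp_max x = x" "(arr(q := hand)) x = Some x" "\<exists>u\<in>cycle_mins. x < u"
    then have "arr x = Some x" using grp_max_ne[OF x(1)] by simp
    then show "(\<exists>s\<in>insert q S. x < s) \<or> (q = x \<and> Some (pi q) \<noteq> None)"
      using sorted_grp_max x by blast
  qed
qed

lemma unstarted_in_grp_if_between:
  assumes C: "cells_inv (Some t) S stk arr hand" and W: "sweep_inv p (Some t) S stk arr V"
    and u: "u \<in> cycle_mins" "V < u" "u < t"
  shows "u \<in> unstarted_in_grp S t"
proof -
  have t: "moved t" using cells_goals[OF C, of t] by simp
  have "cmin t \<le> V" using sweep_window[OF W] by fastforce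
  have u': "moved u" "cmin u = u" using cycle_minsD[OF u(1)] by auto
  have "grp u = grp t"
    using grp_eq_if_overlap[OF t u'(1), of u] \<open>cmin t \<le> V\<close> u u'
      cmax_ge_self[of t] cmax_ge_self[of u]
    by simp
  then have "cyc u \<in> grp t" using cyc_in_grp[OF u'(1)] by simp
  moreover have "u \<notin> S" using started_le[OF W] u(2) by fastforce
  ultimately show ?thesis using u(1) by (simp add: unstarted_in_grp_def)
qed

lemma goal_grp_max_beyond:
  assumes C: "cells_inv (Some t) S stk arr hand" and W: "sweep_inv p (Some t) S stk arr V"
    and g: "g \<in> set (goals (Some t) stk)" and "V \<le> grp_max g"
  shows "t \<le> grp_max g"
proof (rule ccontr)
  let ?y = "grp_max g"
  assume "\<not> t \<le> ?y"
  have t: "moved t" and y: "moved ?y" "grp_max ?y = ?y"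
    using cells_goals[OF C, of t] cells_goals[OF C g] moved_grp_max grp_max_idem by auto
  have "cmin t \<le> V" using sweep_window[OF W] by fastforce
  then have "grp ?y = grp t"
    using grp_eq_if_overlap[OF t y(1), of ?y] y \<open>V \<le> ?y\<close> \<open>\<not> t \<le> ?y\<close>
      cmax_ge_self[of t] cmax_ge_self[of ?y] cmin_le_self[of ?y]
    by simp
  then have "grp_max ?y = grp_max t" by (simp add: grp_max_def)
  then show False using y \<open>\<not> t \<le> ?y\<close> self_le_grp_max[OF t] by simp
qed

lemma sorted_grp_max_started:
  assumes W: "sweep_inv p h S stk arr V"
    and no_jump: "\<not> leaves_grp p"
    and x: "moved x" "grp_max x = x" "arr x = Some x" "\<exists>u\<in>cycle_mins. x < u"
  shows "\<exists>s\<in>S. x < s"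
  using sweep_sorted_grp_max[OF W x] no_jump x by (auto simp: leaves_grp_def mins_right_def)

lemma cells_carry:
  assumes C: "cells_inv (Some t) S stk arr hand" and t: "t \<noteq> cmin t"
  shows "cells_inv (Some (pi t)) S stk (arr(t := hand)) (arr t)"
proof -
  have t': "moved t" "cmin t \<in> S" "t \<in> {1..m}" using cells_goals[OF C, of t]
    by (auto simp: moved_def)
  have hand: "hand = Some t" using cells_hand[OF C] .
  have t_no_goal: "t \<notin> cmin ` X" for X using t by force
  have inner: "cmin g < cmin t" if "g \<in> set (map snd stk)" for g
    using parked_chain_cmin_less[OF cells_chain[OF C refl] that] .
  then have "t \<notin> set (map snd stk)" by blast
  then have goals': "set (goals (Some (pi t)) stk) = insert (pi t) (set (goals (Some t) stk) - {t})"
    by auto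
  show ?thesis
  proof (rule cells_invI)
    show "arr t = Some (pi t)" using cells_active[OF C t'(3), of t] t by simp
    show "parked_chain (arr(t := hand)) g stk" if "Some (pi t) = Some g" for g
    proof (rule parked_chain_update)
      have "g = pi t" using that by simp
      then show "parked_chain arr g stk" using parked_chain_cong[OF cells_chain[OF C refl]] by simp
    qed (metis fun_upd_other t_no_goal)
    show "moved g \<and> cmin g \<in> S" if "g \<in> set (goals (Some (pi t)) stk)" for g
      using that cells_goals[OF C] moved_pi[OF t'(1)] t' by auto
    have "cmin g \<noteq> cmin t" if "g \<in> set (goals (Some t) stk) - {t}" for g
      using that inner[of g] by auto
    then show "cycle_layout S (set (goals (Some (pi t)) stk)) (arr(t := hand))"
      unfolding goals' hand by (intro layout_carry[OF cells_layout[OF C] _ t t'(2)]) simp_all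
  qed simp
qed

lemma no_unstarted_min_between:
  assumes C: "cells_inv (Some t) S stk arr hand" and W: "sweep_inv p (Some t) S stk arr V"
    and no_switch: "\<not> passes_unstarted p S t"
    and u: "u \<in> cycle_mins" "V < u" "u < t"
  shows False
proof -
  let ?U = "unstarted_in_grp S t"
  have "u \<in> ?U" by (rule unstarted_in_grp_if_between[OF C W u])
  moreover have "finite ?U" using finite_cycle_mins by (simp add: unstarted_in_grp_def)
  ultimately have "Min ?U \<in> ?U" "Min ?U \<le> u" using Min_in Min_le by blast+
  then have "V < Min ?U" using unstarted_gt[OF W] by (simp add: unstarted_in_grp_def)
  then show False
    using no_switch \<open>u \<in> ?U\<close> \<open>Min ?U \<le> u\<close> sweep_window[OF W refl] u
    by (auto simp: passes_unstarted_def strictly_between_def)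
qed

lemma sweep_carry:
  assumes C: "cells_inv (Some t) S stk arr hand" and W: "sweep_inv p (Some t) S stk arr V"
    and no_jump: "\<not> leaves_grp p"
    and no_switch: "\<not> passes_unstarted p S t"
    and t: "t \<noteq> cmin t"
  shows "sweep_inv t (Some (pi t)) S stk (arr(t := hand)) (max V t)"
proof -
  have t': "moved t" "cmin t \<in> S" "t \<in> {1..m}" using cells_goals[OF C, of t]
    by (auto simp: moved_def)
  have hand: "hand = Some t" using cells_hand[OF C] .
  show ?thesis
  proof (rule sweep_invI)
    have "u \<le> V" if "u \<in> cycle_mins" "u \<le> t" for u
      using no_unstarted_min_between[OF C W no_switch that(1)] that t cycle_minsD[of t]
      by (cases "u = t") force+
    then show "{u \<in> cycle_mins. u \<le> max V t} = S" using sweep_started[OF W] by (auto simp: max_def)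
    show "(arr(t := hand)) k = Some (pi k)" if "k \<in> {1..m}" "max V t < k" for k
      using sweep_beyond[OF W] that by simp
    show "cmin g \<le> t \<and> t \<le> max V t" if "Some (pi t) = Some g" for g
      using that cmin_le_self[of t] by auto
    show "(arr(t := hand)) t = Some t \<or> t \<in> S" using hand by simp
    show "max V t = t" if "grp_max t = t"
      using sweep_goal_grp[OF W, of t] goal_cell_unsorted[OF C] that by auto
  next
    fix g assume g: "g \<in> set (goals (Some (pi t)) stk)"
    define g0 where "g0 = (if g = pi t then t else g)"
    have g0: "g0 \<in> set (goals (Some t) stk)" "grp_max g0 = grp_max g" using g by (auto simp: g0_def)
    show "max V t \<le> grp_max g \<or> (arr(t := hand)) (grp_max g) = Some (grp_max g)"
      using sweep_goal_grp[OF W g0(1)] goal_grp_max_beyond[OF C W g0(1)] g0(2) hand by auto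
  next
    fix x assume x: "moved x" "grp_max x = x" "(arr(t := hand)) x = Some x" "\<exists>u\<in>cycle_mins. x < u"
    show "(\<exists>s\<in>S. x < s) \<or> (t = x \<and> Some (pi t) \<noteq> None)"
    proof (cases "x = t")
      case False
      then show ?thesis using sorted_grp_max_started[OF W no_jump x(1,2) _ x(4)] x(3) by simp
    qed simp
  next
    show "max V t = 0 \<or> moved (max V t) \<and> cmin (max V t) \<in> S"
      using sweep_frontier[OF W] t' by (auto simp: max_def)
  qed
qed

lemma closing_cell:
  assumes C: "cells_inv (Some t) S stk arr hand" and t: "t = cmin t"
  shows "stk = [] \<and> arr t = None \<or>
    (\<exists>t' rest. stk = (t, t') # rest \<and> arr t = Some t' \<and> cmin t' < t \<and> parked_chain arr t' rest)"
  using cells_chain[OF C refl] t by (cases stk) auto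

lemma goals_after_close:
  assumes C: "cells_inv (Some t) S stk arr hand" and t: "t = cmin t"
  shows "set (goals (arr t) (tl stk)) = set (map snd stk)"
  using closing_cell[OF C t] by (elim disjE exE conjE) simp_all

lemma cells_close:
  assumes C: "cells_inv (Some t) S stk arr hand" and t: "t = cmin t"
  shows "cells_inv (arr t) S (tl stk) (arr(t := hand)) (arr t)"
proof -
  have hand: "hand = Some t" using cells_hand[OF C] .
  have inner: "cmin g < t" if "g \<in> set (map snd stk)" for g
    using parked_chain_cmin_less[OF cells_chain[OF C refl] that] t by simp
  then have "t \<notin> set (map snd stk)" using t by (metis less_irrefl)
  then have goals': "set (goals (arr t) (tl stk)) = set (goals (Some t) stk) - {t}"
    using goals_after_close[OF C t] by auto
  show ?thesis
  proof (rule cells_invI)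
    show "tl stk = []" if "arr t = None" using closing_cell[OF C t] that by auto
  next
    fix g assume g: "arr t = Some g"
    then obtain rest where stk: "stk = (t, g) # rest" "parked_chain arr g rest"
      using closing_cell[OF C t] by auto
    have "(arr(t := hand)) y = arr y" if "y \<in> cmin ` set (g # map snd rest)" for y
      using that inner stk(1) by fastforce
    then show "parked_chain (arr(t := hand)) g (tl stk)"
      using parked_chain_update[OF stk(2)] stk(1) by simp
  next
    show "moved g \<and> cmin g \<in> S" if "g \<in> set (goals (arr t) (tl stk))" for g
      using that cells_goals[OF C] unfolding goals' by auto
    have "cmin g \<noteq> t" if "g \<in> set (goals (Some t) stk) - {t}" for g
      using that inner[of g] by auto
    moreover have "t \<in> S" using cells_goals[OF C, of t] t by simp
    ultimately show "cycle_layout S (set (goals (arr t) (tl stk))) (arr(t := hand))"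
      unfolding goals' hand by (intro layout_close[OF cells_layout[OF C] _ t]) simp_all
  qed simp
qed

lemma sweep_close:
  assumes C: "cells_inv (Some t) S stk arr hand" and W: "sweep_inv p (Some t) S stk arr V"
    and no_jump: "\<not> leaves_grp p"
    and t: "t = cmin t"
  shows "sweep_inv t (arr t) S (tl stk) (arr(t := hand)) V"
proof -
  have t': "moved t" using cells_goals[OF C, of t] by auto
  have hand: "hand = Some t" using cells_hand[OF C] .
  have "t \<le> V" using sweep_window[OF W refl] t by simp
  have not_grp_max: "t \<noteq> grp_max x" if "moved x" for x
    using cmin_grp_max_less[OF that] t by (metis less_irrefl)
  note goals' = goals_after_close[OF C t]
  show ?thesis
  proof (rule sweep_invI)
    show "{u \<in> cycle_mins. u \<le> V} = S" by (rule sweep_started[OF W])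
    show "(arr(t := hand)) k = Some (pi k)" if "k \<in> {1..m}" "V < k" for k
      using sweep_beyond[OF W] that \<open>t \<le> V\<close> by simp
    show "cmin g \<le> t \<and> t \<le> V" if "arr t = Some g" for g
      using closing_cell[OF C t] that \<open>t \<le> V\<close> by auto
    show "(arr(t := hand)) t = Some t \<or> t \<in> S" using hand by simp
    show "V = t" if "moved t" "grp_max t = t" using not_grp_max[OF that(1)] that(2) by simp
    show "V \<le> grp_max g \<or> (arr(t := hand)) (grp_max g) = Some (grp_max g)"
      if "g \<in> set (goals (arr t) (tl stk))" for g
      using that goals' sweep_goal_grp[OF W, of g] hand by auto
    show "V = 0 \<or> moved V \<and> cmin V \<in> S" by (rule sweep_frontier[OF W])
  next
    fix x assume x: "moved x" "grp_max x = x" "(arr(t := hand)) x = Some x" "\<exists>u\<in>cycle_mins. x < u"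
    then have "arr x = Some x" using not_grp_max[OF x(1)] by auto
    then show "(\<exists>s\<in>S. x < s) \<or> (t = x \<and> arr t \<noteq> None)"
      using sorted_grp_max_started[OF W no_jump x(1,2) _ x(4)] by simp
  qed
qed

lemma opt_inv_start:
  assumes I: "opt_inv p h S stk arr hand V"
    and q: "q \<in> cycle_mins" "q \<notin> S" "V \<le> q" "insert q S = {u \<in> cycle_mins. u \<le> q}"
    and parked: "\<And>t. h = Some t \<Longrightarrow> cmin t < q"
    and goal_grp: "\<And>g. g \<in> set (goals h stk) \<Longrightarrow> q \<le> grp_max g \<or> arr (grp_max g) = Some (grp_max g)"
    and sorted_grp_max: "\<And>x. moved x \<Longrightarrow> grp_max x = x \<Longrightarrow> arr x = Some x \<Longrightarrow> \<exists>u\<in>cycle_mins. x < u \<Longrightarrow>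
          \<exists>s\<in>insert q S. x < s"
    and stk': "stk' = (case h of None \<Rightarrow> stk | Some t \<Rightarrow> (q, t) # stk)"
  shows "opt_inv q (Some (pi q)) (insert q S) stk' (arr(q := hand)) (arr q) (max V q)"
    and "work_left (arr(q := hand)) (insert q S) + 1 = work_left arr S"
    and "q \<in> {1..m}"
proof -
  have C: "cells_inv h S stk arr hand" and W: "sweep_inv p h S stk arr V"
    using I by (simp_all add: opt_inv_def)
  have "cells_inv (Some (pi q)) (insert q S) stk' (arr(q := hand)) (arr q)"
    unfolding stk' by (rule cells_start[OF C q(1,2)]) (fact parked)
  moreover have "sweep_inv q (Some (pi q)) (insert q S) stk' (arr(q := hand)) q"
    unfolding stk' by (rule sweep_start[OF C W q(1,3,4)]) (fact goal_grp, fact sorted_grp_max)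
  moreover have "max V q = q" using q(3) by (rule max_absorb2)
  ultimately show "opt_inv q (Some (pi q)) (insert q S) stk' (arr(q := hand)) (arr q) (max V q)"
    by (simp add: opt_inv_def)
  have q': "moved q" "cmin q = q" using cycle_minsD[OF q(1)] by auto
  then show "q \<in> {1..m}" by (simp add: moved_def)
  have "arr q = Some (pi q)" using cells_unstarted[OF C] q(2) q' by (simp add: moved_def)
  moreover have "hand \<noteq> Some q" using cells_hand[OF C] cells_goals[OF C] q(2) q'(2) by fastforce
  ultimately show "work_left (arr(q := hand)) (insert q S) + 1 = work_left arr S"
    using work_left_start[OF q(1,2)] q'(1) by (simp add: moved_def)
qed

lemma start_first_cycle:
  assumes I: "opt_inv p None S stk arr hand V" and ne: "cycle_mins - S \<noteq> {}"
  defines "q \<equiv> Min cycle_mins"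
  shows "V = 0" "S = {}" "stk = []" "hand = None" "q \<in> cycle_mins"
    and "opt_inv q (Some (pi q)) {q} [] (arr(q := hand)) (arr q) q"
    and "work_left (arr(q := hand)) {q} + 1 = work_left arr S"
    and "q \<in> {1..m}"
proof -
  have C: "cells_inv None S stk arr hand" and W: "sweep_inv p None S stk arr V"
    using I by (simp_all add: opt_inv_def)
  show stk: "stk = []" and hand: "hand = None" using cells_idle[OF C] cells_hand[OF C] by simp_all
  show V: "V = 0"
  proof (rule ccontr)
    assume "V \<noteq> 0"
    then have "cycle_mins \<subseteq> S" using idle_all_started[of S arr p V] C W stk hand by simp
    then show False using ne by simp
  qed
  show S: "S = {}" using sweep_started[OF W] V cycle_minsD by (force simp: moved_def)
  show q: "q \<in> cycle_mins" using ne S finite_cycle_mins by (simp add: q_def)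
  have "insert q S = {u \<in> cycle_mins. u \<le> q}"
    using q S finite_cycle_mins by (auto simp: q_def intro: antisym)
  moreover have "\<exists>s\<in>insert q S. x < s"
    if "moved x" "grp_max x = x" "arr x = Some x" "\<exists>u\<in>cycle_mins. x < u" for x
    using sweep_sorted_grp_max[OF W that] S by simp
  ultimately have "opt_inv q (Some (pi q)) (insert q S) stk (arr(q := hand)) (arr q) (max V q) \<and>
      work_left (arr(q := hand)) (insert q S) + 1 = work_left arr S \<and> q \<in> {1..m}"
    using q V S stk by (intro conjI opt_inv_start[OF I]) simp_all
  then show "opt_inv q (Some (pi q)) {q} [] (arr(q := hand)) (arr q) q"
    and "work_left (arr(q := hand)) {q} + 1 = work_left arr S" and "q \<in> {1..m}"
    using V S stk by simp_all
qed

lemma switch_cycle: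
  assumes I: "opt_inv p (Some t) S stk arr hand V"
    and no_jump: "\<not> leaves_grp p"
    and switch: "passes_unstarted p S t"
  defines "q \<equiv> Min (unstarted_in_grp S t)"
  shows "opt_inv q (Some (pi q)) (insert q S) ((q, t) # stk) (arr(q := hand)) (arr q) (max V q)"
    and "work_left (arr(q := hand)) (insert q S) + 1 = work_left arr S"
    and "q \<in> {1..m}" "p < q" "q < t"
proof -
  have C: "cells_inv (Some t) S stk arr hand" and W: "sweep_inv p (Some t) S stk arr V"
    using I by (simp_all add: opt_inv_def)
  have fin: "finite (unstarted_in_grp S t)" using finite_cycle_mins
    by (simp add: unstarted_in_grp_def)
  have sw: "unstarted_in_grp S t \<noteq> {}" "strictly_between p q t"
    using switch by (simp_all add: passes_unstarted_def q_def)
  then have "q \<in> unstarted_in_grp S t" using fin by (simp add: q_def)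
  then have q: "q \<in> cycle_mins" "q \<notin> S" by (auto simp: unstarted_in_grp_def)
  have "V < q" using unstarted_gt[OF W q] .
  have window: "cmin t \<le> p" "p \<le> V" using sweep_window[OF W] by auto
  show "p < q" using \<open>V < q\<close> window by simp
  show "q < t" using sw(2) \<open>p < q\<close> by (auto simp: strictly_between_def)
  have "u \<in> insert q S" if "u \<in> cycle_mins" "u \<le> q" for u
  proof (cases "u \<le> V")
    case False
    then have "u < t \<longrightarrow> q \<le> u"
      using unstarted_in_grp_if_between[OF C W that(1)] fin by (simp add: q_def)
    then show ?thesis using that \<open>q < t\<close> by auto
  qed (use sweep_started[OF W] that in auto)
  then have "insert q S = {u \<in> cycle_mins. u \<le> q}"
    using q(1) \<open>V < q\<close> sweep_started[OF W] by auto
  moreover have "q \<le> grp_max g \<or> arr (grp_max g) = Some (grp_max g)"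
    if "g \<in> set (goals (Some t) stk)" for g
    using sweep_goal_grp[OF W that] goal_grp_max_beyond[OF C W that] \<open>q < t\<close> by auto
  moreover have "\<exists>s\<in>insert q S. x < s"
    if "moved x" "grp_max x = x" "arr x = Some x" "\<exists>u\<in>cycle_mins. x < u" for x
    using sorted_grp_max_started[OF W no_jump that] by blast
  ultimately show
      "opt_inv q (Some (pi q)) (insert q S) ((q, t) # stk) (arr(q := hand)) (arr q) (max V q)"
    and "work_left (arr(q := hand)) (insert q S) + 1 = work_left arr S" and "q \<in> {1..m}"
    using q \<open>V < q\<close> window \<open>p < q\<close> by (intro opt_inv_start[OF I]; simp)+
qed

lemma unsorted_goal_grp_right:
  assumes C: "cells_inv (Some t) S stk arr hand" and W: "sweep_inv p (Some t) S stk arr V"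
    and p: "moved p" "grp_max p = p" and g: "g \<in> set (goals (Some t) stk)"
    and unsorted: "arr (grp_max g) \<noteq> Some (grp_max g)"
  shows "p < cmin (grp_max g)"
proof -
  let ?y = "grp_max g"
  have y: "moved ?y" using cells_goals[OF C g] moved_grp_max by simp
  have "V = p" using sweep_at_grp_max[OF W _ p] by simp
  then have "p \<le> ?y" using sweep_goal_grp[OF W g] unsorted by simp
  moreover have "?y \<noteq> p"
    using sweep_current[OF W] unsorted started_subset[OF W] grp_max_notin_cycle_mins[OF p(1)] p(2)
    by auto
  ultimately have "p < cmax ?y" using cmax_ge_self[of ?y] by simp
  then show ?thesis using not_straddle_grp_max[OF p(1) y] p(2) by fastforce
qed

lemma jump_to_next_group:
  assumes I: "opt_inv p (Some t) S stk arr hand V"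
    and jump: "leaves_grp p"
  defines "q \<equiv> Min (mins_right p)"
  shows "opt_inv q (Some (pi q)) (insert q S) ((q, t) # stk) (arr(q := hand)) (arr q) (max V q)"
    and "work_left (arr(q := hand)) (insert q S) + 1 = work_left arr S"
    and "q \<in> {1..m}" "t \<le> p" "V = p" "p < q"
proof -
  have C: "cells_inv (Some t) S stk arr hand" and W: "sweep_inv p (Some t) S stk arr V"
    using I by (simp_all add: opt_inv_def)
  have fin: "finite (mins_right p)" using finite_cycle_mins by (simp add: mins_right_def)
  have jump': "moved p" "grp_max p = p" "mins_right p \<noteq> {}" using jump
    by (simp_all add: leaves_grp_def)
  have "q \<in> mins_right p" using fin jump'(3) by (simp add: q_def)
  then have q: "q \<in> cycle_mins" and "p < q" by (auto simp: mins_right_def)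
  then show "p < q" by simp
  have q_least: "q \<le> u" if "u \<in> cycle_mins" "p < u" for u
    using that fin by (simp add: q_def mins_right_def)
  show V: "V = p" using sweep_at_grp_max[OF W _ jump'(1,2)] by simp
  have "q \<notin> S" using started_le[OF W] V \<open>p < q\<close> by fastforce
  have window: "cmin t \<le> p" using sweep_window[OF W] by auto
  have t: "moved t" using cells_goals[OF C, of t] by simp
  have "cmax t \<le> p" using not_straddle_grp_max[OF jump'(1) t] window jump'(2) by fastforce
  then show "t \<le> p" using cmax_ge_self[of t] by simp
  have "insert q S = {u \<in> cycle_mins. u \<le> q}"
    using sweep_started[OF W] q_least q V \<open>p < q\<close> by (auto intro: antisym)
  moreover have "q \<le> grp_max g \<or> arr (grp_max g) = Some (grp_max g)"
    if "g \<in> set (goals (Some t) stk)" for g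
  proof (rule disjCI)
    let ?y = "grp_max g"
    assume "arr ?y \<noteq> Some ?y"
    then have "p < cmin ?y" by (rule unsorted_goal_grp_right[OF C W jump'(1,2) that])
    moreover have "moved ?y" using cells_goals[OF C that] moved_grp_max by simp
    ultimately show "q \<le> ?y" using q_least[OF cmin_in_cycle_mins] cmin_le_self[of ?y] by fastforce
  qed
  moreover have "\<exists>s\<in>insert q S. x < s"
    if "moved x" "grp_max x = x" "arr x = Some x" "\<exists>u\<in>cycle_mins. x < u" for x
    using sweep_sorted_grp_max[OF W that] \<open>p < q\<close> by auto
  ultimately show
      "opt_inv q (Some (pi q)) (insert q S) ((q, t) # stk) (arr(q := hand)) (arr q) (max V q)"
    and "work_left (arr(q := hand)) (insert q S) + 1 = work_left arr S" and "q \<in> {1..m}"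
    using q \<open>q \<notin> S\<close> V window \<open>p < q\<close> by (intro opt_inv_start[OF I]; simp)+
qed

lemma carry_step:
  assumes I: "opt_inv p (Some t) S stk arr hand V"
    and no_jump: "\<not> leaves_grp p"
    and no_switch: "\<not> passes_unstarted p S t"
    and t: "t \<noteq> cmin t"
  shows "opt_inv t (Some (pi t)) S stk (arr(t := hand)) (arr t) (max V t)"
    and "work_left (arr(t := hand)) S + 1 = work_left arr S"
    and "t \<in> {1..m}"
proof -
  have C: "cells_inv (Some t) S stk arr hand" and W: "sweep_inv p (Some t) S stk arr V"
    using I by (simp_all add: opt_inv_def)
  show "opt_inv t (Some (pi t)) S stk (arr(t := hand)) (arr t) (max V t)"
    using cells_carry[OF C t] sweep_carry[OF C W no_jump no_switch t] by (simp add: opt_inv_def)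
  show "t \<in> {1..m}" using cells_goals[OF C, of t] by (simp add: moved_def)
  then show "work_left (arr(t := hand)) S + 1 = work_left arr S"
    using work_left_place goal_cell_unsorted[OF C] cells_hand[OF C] by simp
qed

lemma close_step:
  assumes I: "opt_inv p (Some t) S stk arr hand V"
    and no_jump: "\<not> leaves_grp p"
    and t: "t = cmin t"
  shows "(case stk of (c, t') # rest \<Rightarrow> if c = t then (t, Some t', S, rest) else (t, None, S, stk)
           | [] \<Rightarrow> (t, None, S, stk)) = (t, arr t, S, tl stk)"
    and "opt_inv t (arr t) S (tl stk) (arr(t := hand)) (arr t) (max V t)"
    and "work_left (arr(t := hand)) S + 1 = work_left arr S"
    and "t \<in> {1..m}"
proof -
  have C: "cells_inv (Some t) S stk arr hand" and W: "sweep_inv p (Some t) S stk arr V"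
    using I by (simp_all add: opt_inv_def)
  show "(case stk of (c, t') # rest \<Rightarrow> if c = t then (t, Some t', S, rest) else (t, None, S, stk)
           | [] \<Rightarrow> (t, None, S, stk)) = (t, arr t, S, tl stk)"
    using closing_cell[OF C t] by auto
  have "max V t = V" using sweep_window[OF W refl] t by simp
  then show "opt_inv t (arr t) S (tl stk) (arr(t := hand)) (arr t) (max V t)"
    using cells_close[OF C t] sweep_close[OF C W no_jump t] by (simp add: opt_inv_def)
  show "t \<in> {1..m}" using cells_goals[OF C, of t] by (simp add: moved_def)
  then show "work_left (arr(t := hand)) S + 1 = work_left arr S"
    using work_left_place goal_cell_unsorted[OF C] cells_hand[OF C] by simp
qed

text \<open>The moves of OptPlanLOR: from the idle start to the first cycle; toward the goal of the
  held item, never beyond it; and from the maximum of a group to the first cycle of the next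
  group.\<close>

definition opt_move :: "nat \<Rightarrow> nat option \<Rightarrow> nat \<Rightarrow> nat \<Rightarrow> bool" where
  "opt_move p hand V p' \<longleftrightarrow>
     (hand = None \<and> V = 0 \<and> p' = Min cycle_mins \<and> p' \<in> cycle_mins) \<or>
     (\<exists>g. hand = Some g \<and> min p g \<le> p' \<and> p' \<le> max p g) \<or>
     (\<exists>g. hand = Some g \<and> g \<le> p \<and> V = p \<and> leaves_grp p \<and> p' = Min (mins_right p))"

lemma opt_step_inv:
  assumes I: "opt_inv p h S stk arr hand V" and step: "opt_step m pi (p, h, S, stk) = Some (p', s')"
  obtains h' S' stk' where "s' = (p', h', S', stk')"
    and "opt_inv p' h' S' stk' (arr(p' := hand)) (arr p') (max V p')"
    and "work_left (arr(p' := hand)) S' + 1 = work_left arr S"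
    and "p' \<in> {1..m}" "opt_move p hand V p'"
proof (cases h)
  case None
  then have "cycle_mins - S \<noteq> {}" and "(p', s') = start_cycle pi (Min (cycle_mins - S)) S stk None"
    using step by (auto simp: opt_step_idle split: if_splits)
  with start_first_cycle[OF I[unfolded None]] show ?thesis
    by (intro that) (auto simp: start_cycle_def opt_move_def)
next
  case (Some t)
  have hand: "hand = Some t" using I Some by (simp add: opt_inv_def cells_inv_def)
  note step = step[unfolded Some opt_step_carrying]
  consider (jump) "leaves_grp p"
    | (switch) "\<not> leaves_grp p"
        "passes_unstarted p S t"
    | (carry) "\<not> leaves_grp p"
        "\<not> passes_unstarted p S t" "t \<noteq> cmin t"
    | (close) "\<not> leaves_grp p"
        "\<not> passes_unstarted p S t" "t = cmin t"
    by blast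
  then show ?thesis
  proof cases
    case jump
    with step jump_to_next_group[OF I[unfolded Some]] hand show ?thesis
      by (intro that) (auto simp: start_cycle_def opt_move_def)
  next
    case switch
    with step switch_cycle[OF I[unfolded Some]] hand show ?thesis
      by (intro that) (auto simp: start_cycle_def opt_move_def)
  next
    case carry
    with step carry_step[OF I[unfolded Some]] hand show ?thesis
      by (intro that) (auto simp: opt_move_def)
  next
    case close
    with step close_step[OF I[unfolded Some]] hand show ?thesis
      by (intro that) (auto simp: opt_move_def)
  qed
qed

lemma opt_step_None:
  assumes I: "opt_inv p h S stk arr hand V" and step: "opt_step m pi (p, h, S, stk) = None"
  shows "hand = None" "\<forall>i\<in>{1..m}. arr i = Some i" "work_left arr S = 0"
proof -
  have C: "cells_inv h S stk arr hand" using I by (simp add: opt_inv_def)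
  have h: "h = None" using step by (cases h) (simp_all add: opt_step_carrying split: if_splits)
  then have all_started: "cycle_mins \<subseteq> S" using step by (simp add: opt_step_idle split: if_splits)
  show "hand = None" using cells_hand[OF C] h by simp
  show sorted: "\<forall>i\<in>{1..m}. arr i = Some i"
  proof
    fix i assume i: "i \<in> {1..m}"
    show "arr i = Some i"
    proof (cases "moved i")
      case True
      then show ?thesis using cells_finished[OF C i] h all_started cmin_in_cycle_mins by auto
    next
      case False
      then have "cmin i \<notin> S"
        using started_subset I cyc_fixpoint[OF not_moved_fixpoint[OF False]] cycle_minsD
        by (fastforce simp: opt_inv_def cmin_def)
      then show ?thesis using cells_unstarted[OF C i] not_moved_fixpoint[OF False] by simp
    qed
  qed
  then have "{k \<in> {1..m}. arr k \<noteq> Some k} = {}" by auto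
  moreover have "cycle_mins - S = {}" using all_started by blast
  ultimately show "work_left arr S = 0" unfolding work_left_def by (simp only: card.empty add_0)
qed

section \<open>Travel of OptPlanLOR\<close>

definition separating :: "nat \<Rightarrow> bool" where
  "separating x \<longleftrightarrow> (\<forall>i\<in>{1..m}. i \<le> x \<longrightarrow> pi i \<le> x)"

text \<open>A gap that no cycle crosses, but with a cycle to its right, has to be crossed anyway;
  OptPlanLOR does so once, when its frontier first passes the gap.\<close>

definition pending_cut :: "nat \<Rightarrow> nat \<Rightarrow> nat" where
  "pending_cut x V = of_bool (V \<le> x \<and> (\<exists>u\<in>cycle_mins. x < u) \<and> separating x)"

lemma separatingI:
  assumes "\<And>i. moved i \<Longrightarrow> cmin i \<le> x \<Longrightarrow> cmax i \<le> x"
  shows "separating x"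
  unfolding separating_def
proof (intro ballI impI)
  fix i assume "i \<in> {1..m}" "i \<le> x"
  show "pi i \<le> x"
  proof (cases "moved i")
    case True
    then have "cmax i \<le> x" using assms[of i] cmin_le_self[of i] \<open>i \<le> x\<close> by simp
    then show ?thesis using cmax_ge[OF pi_in_cyc[OF self_in_cyc], of i] by simp
  qed (use not_moved_fixpoint \<open>i \<le> x\<close> in simp)
qed

lemma separating_below_cycle_mins: "x < Min cycle_mins \<Longrightarrow> separating x"
  using finite_cycle_mins cmin_in_cycle_mins cmin_le_self
  by (intro separatingI) (meson Min_le le_trans not_le)

lemma separating_after_grp_max:
  assumes p: "moved p" "grp_max p = p" and x: "p \<le> x" "x < Min (mins_right p)"
  shows "separating x"
proof (rule separatingI)
  fix i assume i: "moved i" "cmin i \<le> x"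
  have "\<not> p < cmin i"
  proof
    assume "p < cmin i"
    then have "cmin i \<in> mins_right p" using cmin_in_cycle_mins[OF i(1)]
      by (simp add: mins_right_def)
    then have "Min (mins_right p) \<le> cmin i" using finite_cycle_mins by (simp add: mins_right_def)
    then show False using i(2) x(2) by simp
  qed
  then show "cmax i \<le> x" using not_straddle_grp_max[OF p(1) i(1)] p(2) x(1) by fastforce
qed

lemma opt_move_up_crossing:
  assumes move: "opt_move p hand V p'" and p': "p' \<in> {1..m}"
  shows "of_bool (p \<le> x \<and> x < p') + demand x (arr(p' := hand)) (arr p') p' +
         pending_cut x (max V p')
       \<le> demand x arr hand p + pending_cut x V"
proof -
  have dem: "demand x (arr(p' := hand)) (arr p') p' + of_bool (p \<le> x \<and> x < p' \<and> goal_beyond x hand)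
       = demand x arr hand p + of_bool (p' \<le> x \<and> x < p \<and> goal_beyond x hand)"
    using p' by (intro demand_pns) simp
  have mono: "pending_cut x (max V p') \<le> pending_cut x V" by (simp add: pending_cut_def)
  have passed: "pending_cut x (max V p') = 0" if "x < p'" using that by (simp add: pending_cut_def)
  from move consider (start) "hand = None" "V = 0" "p' = Min cycle_mins" "p' \<in> cycle_mins"
    | (toward) g where "hand = Some g" "min p g \<le> p'" "p' \<le> max p g"
    | (jump) g where "hand = Some g" "g \<le> p" "V = p" "moved p" "grp_max p = p" "mins_right p \<noteq> {}"
        "p' = Min (mins_right p)"
    unfolding opt_move_def leaves_grp_def by blast
  then show ?thesis
  proof cases
    case start
    then have "pending_cut x V = 1" if "x < p'"
      using that separating_below_cycle_mins by (auto simp: pending_cut_def)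
    then show ?thesis using dem mono passed start by (auto simp: goal_beyond_def)
  next
    case toward
    then have "x < g" if "p \<le> x" "x < p'" using that by (auto simp: max_def split: if_splits)
    then show ?thesis using dem mono toward by (auto simp: goal_beyond_def)
  next
    case jump
    have "finite (mins_right p)" using finite_cycle_mins by (simp add: mins_right_def)
    then have "p' \<in> mins_right p" using Min_in jump(6,7) by simp
    then have "p < p'" "p' \<in> cycle_mins" by (auto simp: mins_right_def)
    moreover have "pending_cut x V = 1" if "p \<le> x" "x < p'"
      using that jump separating_after_grp_max[OF jump(4,5)] \<open>p' \<in> cycle_mins\<close>
      by (auto simp: pending_cut_def)
    ultimately show ?thesis using dem mono passed jump by (auto simp: goal_beyond_def)
  qed
qed

lemma opt_run_correct:
  assumes "opt_inv p h S stk arr hand V" "work_left arr S < n"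
  defines "run \<equiv> opt_run n m pi (p, h, S, stk)"
  shows "snd (foldl pns (arr, hand) run) = None \<and>
    (\<forall>i\<in>{1..m}. fst (foldl pns (arr, hand) run) i = Some i) \<and>
    length run = work_left arr S \<and> set run \<subseteq> {1..m} \<and>
    (\<forall>x\<ge>1. up_crossings x (p # run @ [1]) \<le> demand x arr hand p + pending_cut x V)"
  using assms(1,2) unfolding run_def
proof (induction n arbitrary: p h S stk arr hand V)
  case (Suc n)
  show ?case
  proof (cases "opt_step m pi (p, h, S, stk)")
    case None
    then show ?thesis using opt_step_None[OF Suc.prems(1)] by simp
  next
    case (Some r)
    then obtain p' s' where r: "opt_step m pi (p, h, S, stk) = Some (p', s')" by (cases r) auto
    with opt_step_inv[OF Suc.prems(1)] obtain h' S' stk' where s': "s' = (p', h', S', stk')"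
      and I': "opt_inv p' h' S' stk' (arr(p' := hand)) (arr p') (max V p')"
      and work: "work_left (arr(p' := hand)) S' + 1 = work_left arr S"
      and p': "p' \<in> {1..m}" "opt_move p hand V p'"
      by blast
    have run: "opt_run (Suc n) m pi (p, h, S, stk) = p' # opt_run n m pi (p', h', S', stk')"
      using r s' by simp
    have "work_left (arr(p' := hand)) S' < n" using work Suc.prems(2) by simp
    note IH = Suc.IH[OF I' this]
    have "up_crossings x (p # opt_run (Suc n) m pi (p, h, S, stk) @ [1])
        \<le> demand x arr hand p + pending_cut x V"
      if "1 \<le> x" for x
    proof -
      have "up_crossings x (p' # opt_run n m pi (p', h', S', stk') @ [1])
          \<le> demand x (arr(p' := hand)) (arr p') p' + pending_cut x (max V p')"
        using IH that by blast
      then show ?thesis using opt_move_up_crossing[OF p'(2,1), of x arr] unfolding run by simp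
    qed
    then show ?thesis using IH p' work unfolding run by (simp add: fun_upd_def)
  qed
qed simp

lemma opt_inv_init: "opt_inv 1 None {} [] (init_arr pi) None 0"
  unfolding opt_inv_def
proof
  show "cells_inv None {} [] (init_arr pi) None"
    by (rule cells_invI) (simp_all add: init_arr_def cycle_layout_def)
  show "sweep_inv 1 None {} [] (init_arr pi) 0"
    by (rule sweep_invI) (auto simp: init_arr_def moved_def cycle_mins_def)
qed

lemma work_left_init: "work_left (init_arr pi) {} = card {i. moved i} + card cycle_mins"
proof -
  have "{k \<in> {1..m}. init_arr pi k \<noteq> Some k} = {i. moved i}" by (auto simp: init_arr_def moved_def)
  then show ?thesis by (simp add: work_left_def)
qed

lemma opt_plan_lor_correct:
  defines "plan \<equiv> opt_plan_lor m pi"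
  shows "valid_plan m pi plan"
    and "length plan = card {i. moved i} + card cycle_mins"
    and "1 \<le> x \<Longrightarrow> up_crossings x (1 # plan @ [1]) \<le> demand x (init_arr pi) None 1 + pending_cut x 0"
proof -
  have "card {i. moved i} \<le> m" "card cycle_mins \<le> m"
    by (auto intro!: card_mono[of "{1..m}", simplified] simp: moved_def cycle_mins_def)
  then have "work_left (init_arr pi) {} < 2 * m + 1" using work_left_init by simp
  note run = opt_run_correct[OF opt_inv_init this]
  show "valid_plan m pi plan" "length plan = card {i. moved i} + card cycle_mins"
    "1 \<le> x \<Longrightarrow> up_crossings x (1 # plan @ [1]) \<le> demand x (init_arr pi) None 1 + pending_cut x 0"
    using run work_left_init unfolding plan_def opt_plan_lor_def valid_plan_def exec_plan_def
    by auto
qed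

lemma valid_plan_sorted:
  assumes "valid_plan m pi ps"
  shows "fst (exec_plan pi ps) k = Some k"
proof (cases "k \<in> {1..m}")
  case False
  then have "k \<notin> set ps" using assms by (auto simp: valid_plan_def)
  then show ?thesis using exec_plan_unvisited pi_outside[OF False] by simp
qed (use assms in \<open>simp add: valid_plan_def\<close>)

lemma valid_plan_up_crossings_ge_demand:
  assumes valid: "valid_plan m pi ps"
  shows "demand x (init_arr pi) None 1 \<le> up_crossings x (1 # ps @ [1])"
proof -
  have "0 \<notin> set ps" using valid by (auto simp: valid_plan_def)
  then have "demand x (init_arr pi) None 1 \<le> up_crossings x (1 # ps) +
      demand x (fst (exec_plan pi ps)) (snd (exec_plan pi ps)) (last (1 # ps))"
    unfolding exec_plan_def by (rule demand_le_up_crossings)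
  also have "demand x (fst (exec_plan pi ps)) (snd (exec_plan pi ps)) (last (1 # ps)) = 0"
    using valid valid_plan_sorted by (simp add: valid_plan_def demand_def goal_beyond_def)
  also have "up_crossings x (1 # ps) \<le> up_crossings x (1 # ps @ [1])"
    using up_crossings_le_snoc[of x "1 # ps"] by simp
  finally show ?thesis by simp
qed

lemma valid_plan_up_crossings_ge_pending_cut:
  assumes valid: "valid_plan m pi ps" and "1 \<le> x"
  shows "pending_cut x 0 \<le> up_crossings x (1 # ps @ [1])"
proof (cases "pending_cut x 0 = 0")
  case False
  then obtain u where "u \<in> cycle_mins" "x < u" by (auto simp: pending_cut_def)
  then have "u \<in> set ps" using valid_plan_visits_moved[OF valid] cycle_minsD by blast
  then have "0 < up_crossings x (1 # ps @ [1])"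
    using up_crossings_pos[of "1 # ps @ [1]" x u] \<open>x < u\<close> \<open>1 \<le> x\<close> by simp
  then show ?thesis by (simp add: pending_cut_def)
qed simp

lemma demand_init_eq_0_if_pending_cut:
  assumes "pending_cut x 0 \<noteq> 0"
  shows "demand x (init_arr pi) None 1 = 0"
proof -
  have "separating x" using assms by (simp add: pending_cut_def split: if_splits)
  then have "\<not> x < pi k" if "k \<in> {1..x}" for k
    using that pi_outside[of k] by (cases "k \<in> {1..m}") (auto simp: separating_def)
  then show ?thesis by (simp add: demand_def goal_beyond_def init_arr_def)
qed

lemma opt_plan_lor_up_crossings_le:
  assumes valid: "valid_plan m pi ps" and x: "1 \<le> x"
  shows "up_crossings x (1 # opt_plan_lor m pi @ [1]) \<le> up_crossings x (1 # ps @ [1])"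
  using opt_plan_lor_correct(3)[OF x] valid_plan_up_crossings_ge_demand[OF valid, of x]
    valid_plan_up_crossings_ge_pending_cut[OF valid x] demand_init_eq_0_if_pending_cut[of x]
  by (cases "pending_cut x 0 = 0") auto

lemma opt_plan_lor_travel_le:
  assumes valid: "valid_plan m pi ps"
  shows "travel (opt_plan_lor m pi) \<le> travel ps"
proof -
  define K where "K = max m 1"
  have sets: "set (opt_plan_lor m pi) \<subseteq> {1..K}" "set ps \<subseteq> {1..K}" "1 \<le> K"
    using opt_plan_lor_correct(1) valid by (auto simp: valid_plan_def K_def)
  have "(\<Sum>x\<in>{1..<K}. 2 * up_crossings x (1 # opt_plan_lor m pi @ [1]))
      \<le> (\<Sum>x\<in>{1..<K}. 2 * up_crossings x (1 # ps @ [1]))"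
    using opt_plan_lor_up_crossings_le[OF valid] by (intro sum_mono) simp
  then show ?thesis using sets by (simp add: travel_eq_sum_up_crossings)
qed

end

theorem theorem1:
  fixes m :: nat and pi :: "nat \<Rightarrow> nat"
  assumes "pi permutes {1..m}"
  shows "valid_plan m pi (opt_plan_lor m pi)
       \<and> (\<forall>ps. valid_plan m pi ps \<longrightarrow> length (opt_plan_lor m pi) \<le> length ps)
       \<and> (\<forall>ps. valid_plan m pi ps \<and> length ps = length (opt_plan_lor m pi)
               \<longrightarrow> travel (opt_plan_lor m pi) \<le> travel ps)"
proof -
  interpret lor m pi by unfold_locales (rule assms)
  show ?thesis
    using opt_plan_lor_correct(1,2) valid_plan_length_ge opt_plan_lor_travel_le by simp
qed

end
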